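(* Let $\{a_k\}_{k\in\mathbb{Z}}$, $\{b_k\}_{k\in\mathbb{Z}}$ be real sequences with $a_k>0$, let $L$, $L^\ast$, $\mathcal{D}^\ast$, $J^-$, $S^\pm_z$ and the Wronskian be as in the context, and assume that $J^-$ has deficiency indices $(0,0)$. Let $(L',\mathcal D')$ be a self-adjoint extension of $(L,\mathcal{D}(\mathbb{Z}))$. For $z\in\mathbb{C}\setminus\mathbb{R}$ let $\Phi_z\in S^-_z$ be nonzero and $\phi_z\in S^+_z$, chosen with $\overline{(\Phi_z)_k}=(\Phi_{\bar z})_k$ and $\overline{(\phi_z)_k}=(\phi_{\bar z})_k$, such that (1) $[\phi_z,\Phi_z]\neq0$, and (2) the sequence $\tilde\phi_z$ with $(\tilde\phi_z)_k=0$ for $k<0$ and $(\tilde\phi_z)_k=(\phi_z)_k$ for $k\geq0$ belongs to $\mathcal D'$. Define $$G_{k,l}(z)=\frac{1}{[\phi_z,\Phi_z]}\begin{cases}(\Phi_z)_k(\phi_z)_l,& k\leq l,\\ (\Phi_z)_l(\phi_z)_k,& k>l,\end{cases}$$ and $(G(z)v)_k=\sum_{l\in\mathbb{Z}}v_lG_{k,l}(z)$ for $v\in\ell^2(\mathbb{Z})$. Then for every $z\in\mathbb{C}\setminus\mathbb{R}$ the resolvent of $(L',\mathcal D')$ is $(L'-z)^{-1}=G(z)$.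
   Context: $\{e_k\}_{k\in\mathbb{Z}}$ is the standard orthonormal basis of $\ell^2(\mathbb{Z})$, $\mathcal{D}(\mathbb{Z})$ the space of finite linear combinations of the $e_k$, $Le_k=a_ke_{k+1}+b_ke_k+a_{k-1}e_{k-1}$ on $\mathcal{D}(\mathbb{Z})$, and for any sequence $v$, $(L^\ast v)_k=a_kv_{k+1}+b_kv_k+a_{k-1}v_{k-1}$; $\mathcal{D}^\ast=\{v\in\ell^2(\mathbb{Z})\mid L^\ast v\in\ell^2(\mathbb{Z})\}$, and any self-adjoint extension of $L$ is a restriction of $L^\ast$. $J^-$ is the operator on $\ell^2(\mathbb{Z}_{\geq0})$ (standard basis $\{f_k\}$) defined on finite linear combinations by $J^-f_k=a_{-k-2}f_{k+1}+b_{-k-1}f_k+a_{-k-1}f_{k-1}$ for $k\geq1$ and $J^-f_0=a_{-2}f_1+b_{-1}f_0$; its deficiency indices are $(\dim\ker((J^-)^\ast-i),\dim\ker((J^-)^\ast+i))$. For $z\in\mathbb{C}$: $S^-_z=\{f=(f_k)_{k\in\mathbb{Z}}\mid L^\ast f=zf,\ \sum_{k\leq -1}|f_k|^2<\infty\}$ and $S^+_z=\{f\mid L^\ast f=zf,\ \sum_{k\geq0}|f_k|^2<\infty\}$. The Wronskian is $[u,v]_k=a_k(u_{k+1}v_k-u_kv_{k+1})$; for two solutions of $L^\ast u=zu$ it is independent of $k$ and denoted $[u,v]$. *)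

theory Defs
  imports "HOL-Analysis.Analysis"
begin

definition is_l2 :: "('i \<Rightarrow> complex) \<Rightarrow> bool" where
  "is_l2 v \<longleftrightarrow> (\<lambda>k. (cmod (v k))^2) summable_on UNIV"

definition l2_inner :: "('i \<Rightarrow> complex) \<Rightarrow> ('i \<Rightarrow> complex) \<Rightarrow> complex" where
  "l2_inner x y = (\<Sum>\<^sub>\<infinity>k. x k * cnj (y k))"

(* finitely supported sequences: D(Z), resp. finite combinations of the f_k *)
definition fin_supp :: "('i \<Rightarrow> complex) \<Rightarrow> bool" where
  "fin_supp v \<longleftrightarrow> finite {k. v k \<noteq> 0}"

(* the formal difference expression L^* (which agrees with L on D(Z)) *)
definition Lstar :: "(int \<Rightarrow> real) \<Rightarrow> (int \<Rightarrow> real) \<Rightarrow> (int \<Rightarrow> complex) \<Rightarrow> int \<Rightarrow> complex" where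
  "Lstar a b v k = of_real (a k) * v (k + 1) + of_real (b k) * v k + of_real (a (k - 1)) * v (k - 1)"

(* J^- acting on finite combinations of the f_n, written coordinatewise:
   J^- f_k = a_{-k-2} f_{k+1} + b_{-k-1} f_k + a_{-k-1} f_{k-1} (k>=1), J^- f_0 = a_{-2} f_1 + b_{-1} f_0 *)
definition Jminus :: "(int \<Rightarrow> real) \<Rightarrow> (int \<Rightarrow> real) \<Rightarrow> (nat \<Rightarrow> complex) \<Rightarrow> nat \<Rightarrow> complex" where
  "Jminus a b f n =
     (if n \<ge> 1 then of_real (a (- int n - 1)) * f (n - 1) else 0)
     + of_real (b (- int n - 1)) * f n + of_real (a (- int n - 2)) * f (n + 1)"

(* ker((J^-)^* - lam): g in dom (J^-)^* with (J^-)^* g = lam g, i.e.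
   <J^- f, g> = <f, lam g> for all f in the domain of J^- *)
definition Jminus_adj_ker :: "(int \<Rightarrow> real) \<Rightarrow> (int \<Rightarrow> real) \<Rightarrow> complex \<Rightarrow> (nat \<Rightarrow> complex) set" where
  "Jminus_adj_ker a b lam =
     {g. is_l2 g \<and> (\<forall>f. fin_supp f \<longrightarrow> l2_inner (Jminus a b f) g = l2_inner f (\<lambda>n. lam * g n))}"

definition Jminus_def00 :: "(int \<Rightarrow> real) \<Rightarrow> (int \<Rightarrow> real) \<Rightarrow> bool" where
  "Jminus_def00 a b \<longleftrightarrow> Jminus_adj_ker a b \<i> = {(\<lambda>n. 0)} \<and> Jminus_adj_ker a b (- \<i>) = {(\<lambda>n. 0)}"

definition selfadj_ext ::
  "(int \<Rightarrow> real) \<Rightarrow> (int \<Rightarrow> real) \<Rightarrow> ((int \<Rightarrow> complex) \<Rightarrow> (int \<Rightarrow> complex)) \<Rightarrow> (int \<Rightarrow> complex) set \<Rightarrow> bool" where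
  "selfadj_ext a b T D \<longleftrightarrow>
     \<comment> \<open>linear operator in l^2(Z)\<close>
     (\<forall>u\<in>D. is_l2 u \<and> is_l2 (T u)) \<and>
     (\<lambda>k. 0) \<in> D \<and>
     (\<forall>u\<in>D. \<forall>v\<in>D. (\<lambda>k. u k + v k) \<in> D \<and> T (\<lambda>k. u k + v k) = (\<lambda>k. T u k + T v k)) \<and>
     (\<forall>u\<in>D. \<forall>c::complex. (\<lambda>k. c * u k) \<in> D \<and> T (\<lambda>k. c * u k) = (\<lambda>k. c * T u k)) \<and>
     \<comment> \<open>extends L on D(Z)\<close>
     (\<forall>u. fin_supp u \<longrightarrow> u \<in> D \<and> T u = Lstar a b u) \<and>
     \<comment> \<open>self-adjoint: dom T^* = D and T^* = T\<close>
     (\<forall>v. v \<in> D \<longleftrightarrow> (is_l2 v \<and> (\<exists>w. is_l2 w \<and> (\<forall>u\<in>D. l2_inner (T u) v = l2_inner u w)))) \<and>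
     (\<forall>u\<in>D. \<forall>v\<in>D. l2_inner (T u) v = l2_inner u (T v))"

definition S_minus :: "(int \<Rightarrow> real) \<Rightarrow> (int \<Rightarrow> real) \<Rightarrow> complex \<Rightarrow> (int \<Rightarrow> complex) set" where
  "S_minus a b z = {f. Lstar a b f = (\<lambda>k. z * f k) \<and> (\<lambda>k. (cmod (f k))^2) summable_on {..-1}}"

definition S_plus :: "(int \<Rightarrow> real) \<Rightarrow> (int \<Rightarrow> real) \<Rightarrow> complex \<Rightarrow> (int \<Rightarrow> complex) set" where
  "S_plus a b z = {f. Lstar a b f = (\<lambda>k. z * f k) \<and> (\<lambda>k. (cmod (f k))^2) summable_on {0..}}"

definition wronski :: "(int \<Rightarrow> real) \<Rightarrow> (int \<Rightarrow> complex) \<Rightarrow> (int \<Rightarrow> complex) \<Rightarrow> int \<Rightarrow> complex" where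
  "wronski a u v k = of_real (a k) * (u (k + 1) * v k - u k * v (k + 1))"

definition Gker :: "(int \<Rightarrow> real) \<Rightarrow> (int \<Rightarrow> complex) \<Rightarrow> (int \<Rightarrow> complex) \<Rightarrow> int \<Rightarrow> int \<Rightarrow> complex" where
  "Gker a Ph ph k l =
     (if k \<le> l then Ph k * ph l else Ph l * ph k) / wronski a ph Ph 0"

definition Gop :: "(int \<Rightarrow> real) \<Rightarrow> (int \<Rightarrow> complex) \<Rightarrow> (int \<Rightarrow> complex) \<Rightarrow> (int \<Rightarrow> complex) \<Rightarrow> int \<Rightarrow> complex" where
  "Gop a Ph ph v k = (\<Sum>\<^sub>\<infinity>l. v l * Gker a Ph ph k l)"

end

(*
  The kernel G(z) is assembled from Phi_z, square-summable at -oo, and phi_z,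
  square-summable at +oo, so that L^* G(z) v = v + z G(z) v holds pointwise.
  Each column of G(z) combines Phi_z cut off above some m with phi_z cut off
  below it. The cut-off phi_z lies in D' by hypothesis; the cut-off Phi_z lies
  in D' because the boundary Wronskian at -oo of every u in D' vanishes: L is
  in the limit point case at -oo, since two square-summable solutions there
  would, by a discrete Gronwall argument, make the solution of L^* u = i u with
  u_0 = 0 square-summable, i.e. an eigenvector of (J^-)^* for i.
  Hence G(z) maps finitely supported sequences into D' and inverts T - z on
  them. The bound |Im z| |u| <= |(T - z) u| extends G(z) boundedly to l^2;
  since D' is the domain of the adjoint of T, G(z) v lies in D' for every v,
  and the same bound makes T - z injective.
*)
theory Submission
  imports Defs
begin

section \<open>Square-summable sequences\<close>

abbreviation l2_on :: "('i \<Rightarrow> 'a::real_normed_vector) \<Rightarrow> 'i set \<Rightarrow> bool" where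
  "l2_on x A \<equiv> (\<lambda>k. (norm (x k))\<^sup>2) summable_on A"

lemma l2_on_mult_norm:
  fixes x :: "'i \<Rightarrow> 'a::real_normed_vector" and y :: "'i \<Rightarrow> 'b::real_normed_vector"
  assumes "l2_on x A" "l2_on y A"
  shows "(\<lambda>k. norm (x k) * norm (y k)) summable_on A"
proof (rule summable_on_comparison_test)
  show "(\<lambda>k. (norm (x k))\<^sup>2 + (norm (y k))\<^sup>2) summable_on A"
    using assms by (rule summable_on_add)
  show "norm (x k) * norm (y k) \<le> (norm (x k))\<^sup>2 + (norm (y k))\<^sup>2" for k
    using sum_squares_bound[of "norm (x k)" "norm (y k)"]
      mult_nonneg_nonneg[OF norm_ge_zero norm_ge_zero, of "x k" "y k"] by linarith
qed simp

lemma l2_on_mult: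
  fixes x y :: "'i \<Rightarrow> 'a::{real_normed_div_algebra,banach}"
  assumes "l2_on x A" "l2_on y A"
  shows "(\<lambda>k. x k * y k) summable_on A"
  by (rule abs_summable_summable) (use l2_on_mult_norm[OF assms] in \<open>simp add: norm_mult\<close>)

lemma l2_on_add:
  assumes "l2_on x A" "l2_on y A"
  shows "l2_on (\<lambda>k. x k + y k) A"
proof (rule summable_on_comparison_test)
  show "(\<lambda>k. 2 * (norm (x k))\<^sup>2 + 2 * (norm (y k))\<^sup>2) summable_on A"
    using assms by (intro summable_on_add summable_on_cmult_right)
  show "(norm (x k + y k))\<^sup>2 \<le> 2 * (norm (x k))\<^sup>2 + 2 * (norm (y k))\<^sup>2" for k
  proof -
    have "(norm (x k + y k))\<^sup>2 \<le> (norm (x k) + norm (y k))\<^sup>2"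
      by (simp add: norm_triangle_ineq power_mono)
    also have "\<dots> \<le> 2 * (norm (x k))\<^sup>2 + 2 * (norm (y k))\<^sup>2"
      using sum_squares_bound[of "norm (x k)" "norm (y k)"] by (simp add: power2_sum)
    finally show ?thesis .
  qed
qed simp

lemma l2_on_cmult:
  fixes x :: "'i \<Rightarrow> 'a::real_normed_div_algebra"
  assumes "l2_on x A"
  shows "l2_on (\<lambda>k. c * x k) A"
  using summable_on_cmult_right[OF assms, of "(norm c)\<^sup>2"]
  by (simp add: norm_mult power_mult_distrib)

lemma l2_on_diff:
  assumes "l2_on x A" "l2_on y A"
  shows "l2_on (\<lambda>k. x k - y k) A"
  using l2_on_add[OF assms(1), of "\<lambda>k. - y k"] assms(2) by simp

lemma l2_on_finite_support:
  assumes "finite {k \<in> A. x k \<noteq> 0}"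
  shows "l2_on x A"
  by (rule finite_nonzero_values_imp_summable_on, rule finite_subset[OF _ assms]) auto

lemma l2_on_finite_modification:
  assumes "l2_on x A" "finite {k. x k \<noteq> y k}"
  shows "l2_on y A"
proof -
  have "l2_on (\<lambda>k. x k + (y k - x k)) A"
    by (rule l2_on_add[OF assms(1) l2_on_finite_support], rule finite_subset[OF _ assms(2)]) auto
  thus ?thesis by simp
qed

lemma l2_on_cofinite:
  assumes "l2_on x A" "finite (B - A)"
  shows "l2_on x B"
proof -
  have "l2_on x (A \<union> (B - A))" by (intro summable_on_union assms summable_on_finite)
  thus ?thesis by (rule summable_on_subset) auto
qed

lemma l2_on_atMost_extend:
  fixes x :: "int \<Rightarrow> 'a::real_normed_vector"
  assumes "l2_on x {..K}"
  shows "l2_on x {..N}"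
  by (rule l2_on_cofinite[OF assms], rule finite_subset[of _ "{K<..N}"]) auto

lemma is_l2_if_l2_on_halves:
  assumes "l2_on x {..(-1::int)}" "l2_on x {0..}"
  shows "is_l2 x"
proof -
  have "UNIV = {..(-1::int)} \<union> {0..}" by auto
  thus ?thesis unfolding is_l2_def using summable_on_union[OF assms] by simp
qed

lemma infsum_finite_support:
  assumes "finite S" "\<And>n. n \<notin> S \<Longrightarrow> f n = 0"
  shows "infsum f UNIV = sum f S"
  by (rule infsumI, rule has_sum_finite_neutralI) (use assms in auto)

lemma summable_on_diff:
  fixes f g :: "'a \<Rightarrow> 'b::topological_ab_group_add"
  assumes "f summable_on A" "g summable_on A"
  shows "(\<lambda>k. f k - g k) summable_on A"
  using summable_on_add[OF assms(1) summable_on_uminus[THEN iffD2, OF assms(2)]] by simp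

lemma infsum_diff:
  fixes f g :: "'a \<Rightarrow> 'b::{topological_ab_group_add,t2_space}"
  assumes "f summable_on A" "g summable_on A"
  shows "infsum (\<lambda>k. f k - g k) A = infsum f A - infsum g A"
  using infsum_add[OF assms(1) summable_on_uminus[THEN iffD2, OF assms(2)]] infsum_uminus[of g A]
  by simp

lemma tendsto_sum_greaterThanAtMost_at_bot:
  fixes f :: "int \<Rightarrow> 'b::{comm_monoid_add,t2_space}"
  assumes "f summable_on {..N}"
  shows "((\<lambda>M. sum f {M<..N}) \<longlongrightarrow> infsum f {..N}) at_bot"
proof -
  have "filterlim (\<lambda>M. {M<..N}) (finite_subsets_at_top {..N}) at_bot"
  proof (subst filterlim_finite_subsets_at_top, intro allI impI)
    fix X :: "int set" assume X: "finite X \<and> X \<subseteq> {..N}"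
    show "\<forall>\<^sub>F M in at_bot. finite {M<..N} \<and> X \<subseteq> {M<..N} \<and> {M<..N} \<subseteq> {..N}"
      unfolding eventually_at_bot_linorder
      by (rule exI[of _ "Min (insert N X) - 1"]) (use X in \<open>auto dest: Min_le[rotated]\<close>)
  qed
  from filterlim_compose[OF infsum_tendsto[OF assms] this] show ?thesis by simp
qed

lemma tendsto_sum_symmetric_interval:
  fixes f :: "int \<Rightarrow> 'b::{comm_monoid_add,t2_space}"
  assumes "f summable_on UNIV"
  shows "(\<lambda>n. sum f {- int n..int n}) \<longlonglongrightarrow> infsum f UNIV"
proof -
  have "filterlim (\<lambda>n. {- int n..int n}) (finite_subsets_at_top UNIV) sequentially"
  proof (subst filterlim_finite_subsets_at_top, intro allI impI)
    fix X :: "int set" assume X: "finite X \<and> X \<subseteq> UNIV"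
    define N where "N = nat (Max (insert 0 (abs ` X)))"
    have "\<forall>x\<in>X. \<bar>x\<bar> \<le> int N" unfolding N_def using X by (auto intro: Max_ge)
    thus "\<forall>\<^sub>F n in sequentially. finite {- int n..int n} \<and> X \<subseteq> {- int n..int n} \<and> {- int n..int n} \<subseteq> UNIV"
      unfolding eventually_sequentially by (intro exI[of _ N]) force
  qed
  from filterlim_compose[OF infsum_tendsto[OF assms] this] show ?thesis by simp
qed

lemma tendsto_infsum_atMost_at_bot:
  fixes f :: "int \<Rightarrow> real"
  assumes "f summable_on {..N}"
  shows "((\<lambda>K. infsum f {..K}) \<longlongrightarrow> 0) at_bot"
proof -
  have "((\<lambda>K. infsum f {..N} - sum f {K<..N}) \<longlongrightarrow> infsum f {..N} - infsum f {..N}) at_bot"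
    by (intro tendsto_intros tendsto_sum_greaterThanAtMost_at_bot assms)
  moreover have "\<forall>\<^sub>F K in at_bot. infsum f {..N} - sum f {K<..N} = infsum f {..K}"
    unfolding eventually_at_bot_linorder
  proof (intro exI[of _ N] allI impI)
    fix K assume "K \<le> N"
    hence U: "{..N} = {..K} \<union> {K<..N}" by auto
    have "infsum f {..N} = infsum f {..K} + infsum f {K<..N}"
      unfolding U by (rule infsum_Un_disjoint) (use assms U in \<open>auto intro: summable_on_subset\<close>)
    thus "infsum f {..N} - sum f {K<..N} = infsum f {..K}" by simp
  qed
  ultimately show ?thesis by (simp add: Lim_transform_eventually)
qed

lemma eventually_l2_tail_less:
  fixes y :: "int \<Rightarrow> 'a::real_normed_vector"
  assumes "l2_on y {..N}" "e > 0"
  shows "\<forall>\<^sub>F K in at_bot. infsum (\<lambda>k. (norm (y k))\<^sup>2) {..K} < e"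
  using order_tendstoD(2)[OF tendsto_infsum_atMost_at_bot[OF assms(1)] assms(2)] .

lemma L2_set_le_sqrt_infsum:
  fixes f :: "'i \<Rightarrow> real"
  assumes "(\<lambda>k. (f k)\<^sup>2) summable_on A" "finite I" "I \<subseteq> A"
  shows "L2_set f I \<le> sqrt (infsum (\<lambda>k. (f k)\<^sup>2) A)"
  unfolding L2_set_def by (rule real_sqrt_le_mono, rule finite_sum_le_infsum) (use assms in auto)

lemma summable_on_atMost_if_L2_set_bounded:
  fixes y :: "int \<Rightarrow> real"
  assumes "\<And>M. M \<le> K \<Longrightarrow> L2_set y {M..K} \<le> B"
  shows "(\<lambda>k. (y k)\<^sup>2) summable_on {..K}"
proof (rule nonneg_bdd_above_summable_on)
  show "bdd_above (sum (\<lambda>k. (y k)\<^sup>2) ` {F. F \<subseteq> {..K} \<and> finite F})"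
  proof (rule bdd_aboveI2)
    fix F assume F: "F \<in> {F. F \<subseteq> {..K} \<and> finite F}"
    show "sum (\<lambda>k. (y k)\<^sup>2) F \<le> B\<^sup>2"
    proof (cases "F = {}")
      case False
      have MK: "Min F \<le> K" using F False by (auto intro: order.trans[OF Min_le])
      have "sum (\<lambda>k. (y k)\<^sup>2) F \<le> sum (\<lambda>k. (y k)\<^sup>2) {Min F..K}"
        by (rule sum_mono2) (use F False in auto)
      also have "\<dots> = (L2_set y {Min F..K})\<^sup>2" unfolding L2_set_def by (simp add: sum_nonneg)
      also have "\<dots> \<le> B\<^sup>2" by (rule power_mono[OF assms[OF MK]]) simp
      finally show ?thesis .
    qed simp
  qed
qed simp

section \<open>A discrete Gronwall inequality\<close>

text \<open>The perturbation term is absorbed by Cauchy-Schwarz.\<close>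

lemma L2_set_absorb:
  fixes y r p q :: "'i \<Rightarrow> real"
  assumes "finite I"
    and nonneg: "\<And>k. k \<in> I \<Longrightarrow> 0 \<le> y k \<and> 0 \<le> p k \<and> 0 \<le> q k"
    and bound: "\<And>k. k \<in> I \<Longrightarrow> y k \<le> r k + p k * (\<Sum>l\<in>I. q l * y l)"
    and small: "L2_set p I * L2_set q I \<le> 1/2"
  shows "L2_set y I \<le> 2 * L2_set r I"
proof -
  define s where "s = (\<Sum>l\<in>I. q l * y l)"
  have s0: "0 \<le> s" unfolding s_def using nonneg by (intro sum_nonneg) auto
  have "s = (\<Sum>l\<in>I. \<bar>q l\<bar> * \<bar>y l\<bar>)" unfolding s_def using nonneg by (intro sum.cong) auto
  hence s_le: "s \<le> L2_set q I * L2_set y I" using L2_set_mult_ineq[of q y I] by simp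
  have "L2_set y I \<le> L2_set (\<lambda>k. r k + p k * s) I"
    by (rule L2_set_mono) (use bound nonneg in \<open>auto simp: s_def\<close>)
  also have "\<dots> \<le> L2_set r I + L2_set (\<lambda>k. p k * s) I"
    by (rule L2_set_triangle_ineq)
  also have "L2_set (\<lambda>k. p k * s) I = L2_set p I * s"
    using L2_set_left_distrib[OF s0, of p I] by simp
  also have "\<dots> \<le> L2_set p I * (L2_set q I * L2_set y I)"
    by (rule mult_left_mono[OF s_le]) simp
  also have "\<dots> \<le> 1/2 * L2_set y I"
    using mult_right_mono[OF small L2_set_nonneg[of y I]] by (simp add: mult.assoc)
  finally show ?thesis by simp
qed

lemma l2_on_atMost_gronwall:
  fixes y r p q :: "int \<Rightarrow> real"
  assumes nonneg: "\<And>k. k \<le> K \<Longrightarrow> 0 \<le> y k \<and> 0 \<le> p k \<and> 0 \<le> q k"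
    and bound: "\<And>k. k \<le> K \<Longrightarrow> y k \<le> r k + p k * (\<Sum>l\<in>{k<..K}. q l * y l)"
    and r: "l2_on r {..K}" and p: "l2_on p {..K}" and q: "l2_on q {..K}"
    and small: "infsum (\<lambda>k. (p k)\<^sup>2) {..K} * infsum (\<lambda>k. (q k)\<^sup>2) {..K} \<le> 1/4"
  shows "l2_on y {..K}"
proof -
  have L2_le: "L2_set f {M..K} \<le> sqrt (infsum (\<lambda>k. (f k)\<^sup>2) {..K})"
    if "l2_on f {..K}" for f :: "int \<Rightarrow> real" and M
    by (rule L2_set_le_sqrt_infsum) (use that in auto)
  have "L2_set y {M..K} \<le> 2 * sqrt (infsum (\<lambda>k. (r k)\<^sup>2) {..K})" if "M \<le> K" for M
  proof -
    have "L2_set y {M..K} \<le> 2 * L2_set r {M..K}"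
    proof (rule L2_set_absorb)
      show "y k \<le> r k + p k * (\<Sum>l\<in>{M..K}. q l * y l)" if k: "k \<in> {M..K}" for k
      proof -
        have "(\<Sum>l\<in>{k<..K}. q l * y l) \<le> (\<Sum>l\<in>{M..K}. q l * y l)"
          by (rule sum_mono2) (use k nonneg in auto)
        hence "p k * (\<Sum>l\<in>{k<..K}. q l * y l) \<le> p k * (\<Sum>l\<in>{M..K}. q l * y l)"
          by (rule mult_left_mono) (use k nonneg in auto)
        thus ?thesis using bound[of k] k by simp
      qed
      have "L2_set p {M..K} * L2_set q {M..K}
          \<le> sqrt (infsum (\<lambda>k. (p k)\<^sup>2) {..K}) * sqrt (infsum (\<lambda>k. (q k)\<^sup>2) {..K})"
        using L2_le[OF p] L2_le[OF q] by (intro mult_mono) (auto intro: infsum_nonneg)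
      also have "\<dots> \<le> sqrt (1/4)" using small by (simp flip: real_sqrt_mult)
      finally show "L2_set p {M..K} * L2_set q {M..K} \<le> 1/2" by (simp add: real_sqrt_divide)
    qed (use nonneg in auto)
    also have "\<dots> \<le> 2 * sqrt (infsum (\<lambda>k. (r k)\<^sup>2) {..K})" using L2_le[OF r] by simp
    finally show ?thesis .
  qed
  from summable_on_atMost_if_L2_set_bounded[OF this] show ?thesis by simp
qed

section \<open>Wronskians\<close>

lemma wronski_diff:
  "wronski a x y k - wronski a x y (k - 1) = y k * Lstar a b x k - x k * Lstar a b y k"
  by (simp add: wronski_def Lstar_def algebra_simps)

lemma green_formula:
  assumes "M \<le> N"
  shows "(\<Sum>k\<in>{M<..N}. y k * Lstar a b x k - x k * Lstar a b y k) = wronski a x y N - wronski a x y M"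
  using assms
proof (induction N rule: int_ge_induct)
  case (step N)
  have "{M<..N + 1} = insert (N + 1) {M<..N}" using step.hyps by auto
  thus ?case using step.IH wronski_diff[of a x y "N + 1" b] by (simp add: algebra_simps)
qed simp

definition Lstar_solution :: "(int \<Rightarrow> real) \<Rightarrow> (int \<Rightarrow> real) \<Rightarrow> complex \<Rightarrow> (int \<Rightarrow> complex) \<Rightarrow> bool" where
  "Lstar_solution a b w x \<longleftrightarrow> Lstar a b x = (\<lambda>k. w * x k)"

lemma S_minus_iff: "f \<in> S_minus a b z \<longleftrightarrow> Lstar_solution a b z f \<and> l2_on f {..-1}"
  by (simp add: S_minus_def Lstar_solution_def)

lemma S_plus_iff: "f \<in> S_plus a b z \<longleftrightarrow> Lstar_solution a b z f \<and> l2_on f {0..}"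
  by (simp add: S_plus_def Lstar_solution_def)

lemma Lstar_cmult: "Lstar a b (\<lambda>k. c * x k) k = c * Lstar a b x k"
  by (simp add: Lstar_def algebra_simps)

lemma Lstar_cnj: "Lstar a b (\<lambda>k. cnj (x k)) k = cnj (Lstar a b x k)"
  by (simp add: Lstar_def)

lemma Lstar_diff: "Lstar a b (\<lambda>k. x k - y k) k = Lstar a b x k - Lstar a b y k"
  by (simp add: Lstar_def algebra_simps)

lemma Lstar_solution_D:
  assumes "Lstar_solution a b w P"
  shows "of_real (a k) * P (k + 1) + of_real (b k) * P k + of_real (a (k - 1)) * P (k - 1) = w * P k"
  using fun_cong[OF assms[unfolded Lstar_solution_def], of k] by (simp add: Lstar_def)

lemma Lstar_solution_cmult: "Lstar_solution a b w x \<Longrightarrow> Lstar_solution a b w (\<lambda>k. c * x k)"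
  by (simp add: Lstar_solution_def Lstar_cmult fun_eq_iff)

lemma wronski_cmult_right: "wronski a x (\<lambda>k. c * y k) k = c * wronski a x y k"
  by (simp add: wronski_def algebra_simps)

lemma wronski_swap: "wronski a x y k = - wronski a y x k"
  by (simp add: wronski_def algebra_simps)

lemma wronski_const:
  assumes "Lstar_solution a b w x" "Lstar_solution a b w y"
  shows "wronski a x y k = wronski a x y 0"
proof -
  have step: "wronski a x y k = wronski a x y (k - 1)" for k
    using wronski_diff[of a x y k b] assms by (simp add: Lstar_solution_def algebra_simps)
  show ?thesis
    by (induction k rule: int_induct[where k=0]) (use step[of "_ + 1"] step in auto)
qed

lemma wronski_expansion:
  "wronski a x Q k * P k - wronski a x P k * Q k = x k * wronski a P Q k"
  by (simp add: wronski_def algebra_simps)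

lemma wronski_variation:
  assumes "Lstar_solution a b w P" "k \<le> K"
  shows "wronski a x P k = wronski a x P K - (\<Sum>l\<in>{k<..K}. P l * (Lstar a b x l - w * x l))"
proof -
  have "(\<Sum>l\<in>{k<..K}. P l * (Lstar a b x l - w * x l))
      = (\<Sum>l\<in>{k<..K}. P l * Lstar a b x l - x l * Lstar a b P l)"
    using assms(1) by (intro sum.cong) (auto simp: Lstar_solution_def algebra_simps)
  thus ?thesis using green_formula[OF assms(2), where y=P and a=a and b=b and x=x] by simp
qed

lemma norm_wronski_le:
  assumes "Lstar_solution a b w P" "k \<le> K"
  shows "norm (wronski a x P k)
    \<le> norm (wronski a x P K) + (\<Sum>l\<in>{k<..K}. norm (P l) * norm (Lstar a b x l - w * x l))"
proof -
  have "norm (wronski a x P k) \<le> norm (wronski a x P K) + norm (\<Sum>l\<in>{k<..K}. P l * (Lstar a b x l - w * x l))"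
    unfolding wronski_variation[OF assms] by (rule norm_triangle_ineq4)
  also have "norm (\<Sum>l\<in>{k<..K}. P l * (Lstar a b x l - w * x l))
      \<le> (\<Sum>l\<in>{k<..K}. norm (P l) * norm (Lstar a b x l - w * x l))"
    by (rule order_trans[OF norm_sum]) (simp add: norm_mult)
  finally show ?thesis by simp
qed

section \<open>Weyl's alternative at \<open>-\<infinity>\<close>\<close>

lemma norm_second_solution_le:
  assumes Q: "Lstar_solution a b w Q" and PQ: "wronski a P Q k = 1"
    and c: "0 < c" "c \<le> norm (wronski a x P k)" and k: "k \<le> K"
  shows "norm (Q k) \<le> (1/c) * (norm (x k) + norm (wronski a x Q K) * norm (P k))
      + (1/c) * norm (P k) * (\<Sum>l\<in>{k<..K}. norm (Lstar a b x l - w * x l) * norm (Q l))"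
proof -
  have "c * norm (Q k) \<le> norm (wronski a x P k * Q k)"
    using c by (simp add: norm_mult mult_right_mono)
  also have "wronski a x P k * Q k = wronski a x Q k * P k - x k"
    using wronski_expansion[of a x Q k P] PQ by (simp add: algebra_simps)
  also have "norm \<dots> \<le> norm (wronski a x Q k) * norm (P k) + norm (x k)"
    by (metis norm_mult norm_triangle_ineq4)
  also have "\<dots> \<le> (norm (wronski a x Q K) + (\<Sum>l\<in>{k<..K}. norm (Q l) * norm (Lstar a b x l - w * x l)))
      * norm (P k) + norm (x k)"
    using norm_wronski_le[OF Q k, of x] by (intro add_right_mono mult_right_mono) auto
  finally have "c * norm (Q k) \<le> norm (x k) + norm (wronski a x Q K) * norm (P k)
      + norm (P k) * (\<Sum>l\<in>{k<..K}. norm (Lstar a b x l - w * x l) * norm (Q l))"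
    by (simp add: algebra_simps mult.commute)
  from mult_left_mono[OF this, of "1/c"] c show ?thesis by (simp add: algebra_simps)
qed

text \<open>Once \<open>K\<close> is so far out that the tails of \<open>P\<close> and \<open>(L\<^sup>* - w) x\<close> are small, the Gronwall
  inequality turns the pointwise bound above into square-summability of \<open>Q\<close>.\<close>

lemma l2_on_second_solution:
  assumes Q: "Lstar_solution a b w Q"
    and PQ: "\<And>k. wronski a P Q k = 1"
    and lP: "l2_on P {..-1}" and lx: "l2_on x {..-1}"
    and lf: "l2_on (\<lambda>l. Lstar a b x l - w * x l) {..-1}"
    and c: "c > 0" and K0: "\<And>k. k \<le> K0 \<Longrightarrow> c \<le> norm (wronski a x P k)"
  shows "l2_on Q {..-1}"
proof -
  define f where "f l = Lstar a b x l - w * x l" for l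
  have "\<forall>\<^sub>F K in at_bot. infsum (\<lambda>k. (norm (P k))\<^sup>2) {..K} < 1
      \<and> infsum (\<lambda>k. (norm (f k))\<^sup>2) {..K} < c\<^sup>2 / 4 \<and> K \<le> min K0 (-1)"
    using lf c unfolding f_def
    by (intro eventually_conj eventually_l2_tail_less[OF lP] eventually_l2_tail_less eventually_le_at_bot) auto
  then obtain K where tP: "infsum (\<lambda>k. (norm (P k))\<^sup>2) {..K} < 1"
    and tf: "infsum (\<lambda>k. (norm (f k))\<^sup>2) {..K} < c\<^sup>2 / 4" and K: "K \<le> K0" "K \<le> -1"
    unfolding eventually_at_bot_linorder by auto
  have lK: "l2_on (\<lambda>k. norm (y k)) {..K}" if "l2_on y {..-1}" for y :: "int \<Rightarrow> complex"
    using summable_on_subset[OF that, of "{..K}"] K by simp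
  define C where "C = norm (wronski a x Q K)"
  have "l2_on (\<lambda>k. norm (Q k)) {..K}"
  proof (rule l2_on_atMost_gronwall[where r="\<lambda>k. (1/c) * (norm (x k) + C * norm (P k))"
        and p="\<lambda>k. (1/c) * norm (P k)" and q="\<lambda>k. norm (f k)"])
    show "norm (Q k) \<le> (1/c) * (norm (x k) + C * norm (P k))
        + (1/c) * norm (P k) * (\<Sum>l\<in>{k<..K}. norm (f l) * norm (Q l))" if "k \<le> K" for k
      unfolding C_def f_def using that K by (intro norm_second_solution_le Q PQ c K0) auto
    have "infsum (\<lambda>k. ((1/c) * norm (P k))\<^sup>2) {..K} * infsum (\<lambda>k. (norm (f k))\<^sup>2) {..K}
        = (infsum (\<lambda>k. (norm (P k))\<^sup>2) {..K} * infsum (\<lambda>k. (norm (f k))\<^sup>2) {..K}) / c\<^sup>2"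
      unfolding power_mult_distrib infsum_cmult_right' by (simp add: power_one_over)
    also have "\<dots> \<le> (1 * (c\<^sup>2 / 4)) / c\<^sup>2"
      using tP tf by (intro divide_right_mono mult_mono) (auto intro: infsum_nonneg)
    finally show "infsum (\<lambda>k. ((1/c) * norm (P k))\<^sup>2) {..K} * infsum (\<lambda>k. (norm (f k))\<^sup>2) {..K} \<le> 1/4"
      using c by simp
    show "l2_on (\<lambda>k. (1/c) * (norm (x k) + C * norm (P k))) {..K}"
      by (intro l2_on_cmult l2_on_add lK lx lP)
    show "l2_on (\<lambda>k. (1/c) * norm (P k)) {..K}" by (intro l2_on_cmult lK lP)
  qed (use c lK[OF lf[folded f_def]] in auto)
  thus ?thesis using l2_on_atMost_extend[of _ K "-1"] by simp
qed

lemma norm_le_wronski_expansion: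
  assumes P: "Lstar_solution a b w P" and Q: "Lstar_solution a b w Q"
    and PQ: "wronski a P Q k = 1" and k: "k \<le> K"
  defines "R \<equiv> \<lambda>l. norm (P l) + norm (Q l)"
  shows "norm (u k) \<le> (norm (wronski a u Q K) + norm (wronski a u P K)) * R k
      + R k * (\<Sum>l\<in>{k<..K}. R l * norm (Lstar a b u l - w * u l))"
proof -
  define S where "S = (\<Sum>l\<in>{k<..K}. R l * norm (Lstar a b u l - w * u l))"
  have W_le: "norm (wronski a u V k) \<le> norm (wronski a u V K) + S"
    if V: "Lstar_solution a b w V" "\<And>l. norm (V l) \<le> R l" for V
  proof -
    have "(\<Sum>l\<in>{k<..K}. norm (V l) * norm (Lstar a b u l - w * u l)) \<le> S"
      unfolding S_def by (intro sum_mono mult_right_mono V(2)) simp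
    thus ?thesis using norm_wronski_le[OF V(1) k, of u] by linarith
  qed
  have "u k = wronski a u Q k * P k - wronski a u P k * Q k"
    using wronski_expansion[of a u Q k P] PQ by simp
  hence "norm (u k) \<le> norm (wronski a u Q k) * norm (P k) + norm (wronski a u P k) * norm (Q k)"
    by (metis norm_mult norm_triangle_ineq4)
  also have "\<dots> \<le> (norm (wronski a u Q K) + S) * norm (P k) + (norm (wronski a u P K) + S) * norm (Q k)"
    by (intro add_mono mult_right_mono W_le P Q) (auto simp: R_def)
  also have "\<dots> \<le> (norm (wronski a u Q K) + norm (wronski a u P K)) * R k + R k * S"
    unfolding R_def by (simp add: algebra_simps)
  finally show ?thesis unfolding S_def .
qed

text \<open>Writing \<open>u = [u, Q] P - [u, P] Q\<close> and treating \<open>(z - w) u\<close> as an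
  inhomogeneity, square-summability of \<open>P\<close> and \<open>Q\<close> transfers to every solution at \<open>z\<close>.\<close>

lemma l2_on_solution_if_limit_circle:
  assumes P: "Lstar_solution a b w P" and Q: "Lstar_solution a b w Q"
    and PQ: "\<And>k. wronski a P Q k = 1"
    and lP: "l2_on P {..-1}" and lQ: "l2_on Q {..-1}"
    and u: "\<And>l. l \<le> -1 \<Longrightarrow> Lstar a b u l = z * u l"
  shows "l2_on u {..-1}"
proof -
  define e where "e = norm (z - w)"
  have e0: "0 \<le> e" by (simp add: e_def)
  define R where "R k = norm (P k) + norm (Q k)" for k
  have lR: "l2_on R {..-1}" unfolding R_def using lP lQ by (intro l2_on_add) auto
  have "\<forall>\<^sub>F K in at_bot. infsum (\<lambda>k. (norm (R k))\<^sup>2) {..K} < 1 / (2 * (e + 1)) \<and> K \<le> -1"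
    by (intro eventually_conj eventually_l2_tail_less[OF lR] eventually_le_at_bot) (use e0 in simp)
  then obtain K where tR: "infsum (\<lambda>k. (R k)\<^sup>2) {..K} < 1 / (2 * (e + 1))" and K: "K \<le> -1"
    unfolding eventually_at_bot_linorder by auto
  have lRK: "l2_on R {..K}" by (rule summable_on_subset[OF lR]) (use K in auto)
  define C where "C = norm (wronski a u Q K) + norm (wronski a u P K)"
  have "l2_on (\<lambda>k. norm (u k)) {..K}"
  proof (rule l2_on_atMost_gronwall[where r="\<lambda>k. C * R k" and p=R and q="\<lambda>k. e * R k"])
    show "norm (u k) \<le> C * R k + R k * (\<Sum>l\<in>{k<..K}. e * R l * norm (u l))" if k: "k \<le> K" for k
    proof -
      have f: "norm (Lstar a b u l - w * u l) = e * norm (u l)" if "l \<in> {k<..K}" for l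
        using u[of l] that K by (simp add: e_def norm_mult flip: left_diff_distrib)
      have "(\<Sum>l\<in>{k<..K}. R l * norm (Lstar a b u l - w * u l)) = (\<Sum>l\<in>{k<..K}. e * R l * norm (u l))"
        by (rule sum.cong) (auto simp: f)
      with norm_le_wronski_expansion[OF P Q PQ k, of u] show ?thesis
        by (simp add: C_def R_def)
    qed
    have "infsum (\<lambda>k. (R k)\<^sup>2) {..K} * infsum (\<lambda>k. (e * R k)\<^sup>2) {..K} = (e * infsum (\<lambda>k. (R k)\<^sup>2) {..K})\<^sup>2"
      unfolding power_mult_distrib infsum_cmult_right' by (simp add: power2_eq_square)
    also have "\<dots> \<le> (1/2)\<^sup>2"
    proof (rule power_mono)
      have "e * infsum (\<lambda>k. (R k)\<^sup>2) {..K} \<le> e * (1 / (2 * (e + 1)))"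
        using tR by (intro mult_left_mono) (auto simp: e_def)
      also have "\<dots> \<le> 1/2" using e0 by (simp add: field_simps)
      finally show "e * infsum (\<lambda>k. (R k)\<^sup>2) {..K} \<le> 1/2" .
    qed (use e0 in \<open>auto intro!: mult_nonneg_nonneg infsum_nonneg\<close>)
    finally show "infsum (\<lambda>k. (R k)\<^sup>2) {..K} * infsum (\<lambda>k. (e * R k)\<^sup>2) {..K} \<le> 1/4"
      by (simp add: power_divide)
  qed (use lRK l2_on_cmult[OF lRK, of C] l2_on_cmult[OF lRK, of e] e0 in \<open>auto simp: R_def\<close>)
  thus ?thesis using l2_on_atMost_extend[of _ K "-1"] by simp
qed

section \<open>The \<open>\<ell>\<^sup>2\<close> inner product\<close>

definition l2_norm :: "('i \<Rightarrow> complex) \<Rightarrow> real" where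
  "l2_norm x = sqrt (\<Sum>\<^sub>\<infinity>k. (cmod (x k))\<^sup>2)"

lemma l2_norm_nonneg: "0 \<le> l2_norm x"
  unfolding l2_norm_def by (simp add: infsum_nonneg)

lemma power2_l2_norm: "(l2_norm x)\<^sup>2 = (\<Sum>\<^sub>\<infinity>k. (cmod (x k))\<^sup>2)"
  unfolding l2_norm_def by (simp add: infsum_nonneg)

lemma l2_inner_summable:
  assumes "is_l2 x" "is_l2 y"
  shows "(\<lambda>k. x k * cnj (y k)) summable_on UNIV"
  by (rule l2_on_mult) (use assms in \<open>simp_all add: is_l2_def\<close>)

lemma l2_inner_add_right:
  assumes "is_l2 x" "is_l2 y" "is_l2 y'"
  shows "l2_inner x (\<lambda>k. y k + y' k) = l2_inner x y + l2_inner x y'"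
  unfolding l2_inner_def
  by (simp add: distrib_left infsum_add l2_inner_summable assms)

lemma l2_inner_diff_left:
  assumes "is_l2 x" "is_l2 x'" "is_l2 y"
  shows "l2_inner (\<lambda>k. x k - x' k) y = l2_inner x y - l2_inner x' y"
  unfolding l2_inner_def
  by (simp add: left_diff_distrib infsum_diff l2_inner_summable assms)

lemma l2_inner_cmult_right: "l2_inner x (\<lambda>k. c * y k) = cnj c * l2_inner x y"
  unfolding l2_inner_def by (simp add: infsum_cmult_right' mult.left_commute)

lemma l2_inner_cmult_left: "l2_inner (\<lambda>k. c * x k) y = c * l2_inner x y"
  unfolding l2_inner_def by (simp add: infsum_cmult_right' mult.assoc)

lemma l2_inner_commute: "l2_inner y x = cnj (l2_inner x y)"
  unfolding l2_inner_def by (simp flip: infsum_cnj add: mult.commute)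

lemma l2_inner_self:
  assumes "is_l2 x"
  shows "l2_inner x x = of_real ((l2_norm x)\<^sup>2)"
proof -
  have "l2_inner x x = (\<Sum>\<^sub>\<infinity>k. of_real ((cmod (x k))\<^sup>2))"
    unfolding l2_inner_def by (intro infsum_cong) (rule complex_norm_square[symmetric])
  also have "\<dots> = of_real (\<Sum>\<^sub>\<infinity>k. (cmod (x k))\<^sup>2)"
    by (rule infsumI, rule has_sum_of_real, rule has_sum_infsum) (use assms in \<open>simp add: is_l2_def\<close>)
  finally show ?thesis by (simp add: l2_norm_def infsum_nonneg)
qed

lemma l2_inner_Cauchy_Schwarz:
  assumes "is_l2 x" "is_l2 y"
  shows "cmod (l2_inner x y) \<le> l2_norm x * l2_norm y"
proof -
  have xy: "(\<lambda>k. cmod (x k) * cmod (y k)) summable_on UNIV"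
    using l2_on_mult_norm assms unfolding is_l2_def by blast
  have "cmod (l2_inner x y) \<le> (\<Sum>\<^sub>\<infinity>k. cmod (x k) * cmod (y k))"
    unfolding l2_inner_def
    by (rule norm_infsum_le[OF has_sum_infsum[OF l2_inner_summable[OF assms]] has_sum_infsum[OF xy]])
       (simp add: norm_mult)
  also have "\<dots> \<le> l2_norm x * l2_norm y"
  proof (rule infsum_le_finite_sums[OF xy])
    fix F :: "'a set" assume F: "finite F"
    have "(\<Sum>k\<in>F. cmod (x k) * cmod (y k)) \<le> L2_set (\<lambda>k. cmod (x k)) F * L2_set (\<lambda>k. cmod (y k)) F"
      using L2_set_mult_ineq[of "\<lambda>k. cmod (x k)" "\<lambda>k. cmod (y k)" F] by simp
    also have "\<dots> \<le> l2_norm x * l2_norm y"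
      unfolding l2_norm_def using assms F
      by (intro mult_mono L2_set_le_sqrt_infsum) (auto simp: is_l2_def intro: infsum_nonneg)
    finally show "(\<Sum>k\<in>F. cmod (x k) * cmod (y k)) \<le> l2_norm x * l2_norm y" .
  qed
  finally show ?thesis .
qed

lemma l2_norm_eq_0D:
  assumes "is_l2 x" "l2_norm x = 0"
  shows "x = (\<lambda>k. 0)"
proof
  fix k
  have "(\<Sum>\<^sub>\<infinity>k. (cmod (x k))\<^sup>2) = 0"
    using assms(2) unfolding l2_norm_def by (simp add: infsum_nonneg)
  hence "(cmod (x k))\<^sup>2 = 0"
    by (intro nonneg_infsum_le_0D[of "\<lambda>k. (cmod (x k))\<^sup>2" UNIV]) (use assms(1) in \<open>auto simp: is_l2_def\<close>)
  thus "x k = 0" by simp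
qed

definition truncate :: "nat \<Rightarrow> (int \<Rightarrow> complex) \<Rightarrow> int \<Rightarrow> complex" where
  "truncate n v k = (if \<bar>k\<bar> \<le> int n then v k else 0)"

lemma fin_supp_truncate: "fin_supp (truncate n v)"
  unfolding fin_supp_def truncate_def by (rule finite_subset[of _ "{- int n..int n}"]) auto

lemma is_l2_fin_supp: "fin_supp v \<Longrightarrow> is_l2 v"
  unfolding fin_supp_def is_l2_def by (intro l2_on_finite_support) simp

lemma l2_norm_truncate_le:
  assumes "is_l2 v"
  shows "l2_norm (truncate n v) \<le> l2_norm v"
  unfolding l2_norm_def
proof (rule real_sqrt_le_mono, rule infsum_mono)
  show "(\<lambda>k. (cmod (truncate n v k))\<^sup>2) summable_on UNIV"
    using is_l2_fin_supp[OF fin_supp_truncate] by (simp add: is_l2_def)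
qed (use assms in \<open>auto simp: is_l2_def truncate_def\<close>)

lemma tendsto_l2_norm_truncate_remainder:
  assumes "is_l2 v"
  shows "(\<lambda>n. l2_norm (\<lambda>k. v k - truncate n v k)) \<longlonglongrightarrow> 0"
proof -
  have sq: "(l2_norm (\<lambda>k. v k - truncate n v k))\<^sup>2
      = (\<Sum>\<^sub>\<infinity>k. (cmod (v k))\<^sup>2) - (\<Sum>k\<in>{- int n..int n}. (cmod (v k))\<^sup>2)" for n
  proof -
    define t where "t k = (if k \<in> {- int n..int n} then (cmod (v k))\<^sup>2 else 0)" for k
    have "(\<lambda>k. (cmod (v k - truncate n v k))\<^sup>2) = (\<lambda>k. (cmod (v k))\<^sup>2 - t k)"
      by (auto simp: truncate_def t_def fun_eq_iff)
    moreover have t_sum: "infsum t UNIV = (\<Sum>k\<in>{- int n..int n}. (cmod (v k))\<^sup>2)"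
      by (subst infsum_finite_support[of "{- int n..int n}"]) (auto simp: t_def)
    moreover have "t summable_on UNIV"
      by (rule finite_nonzero_values_imp_summable_on, rule finite_subset[of _ "{- int n..int n}"])
         (auto simp: t_def)
    ultimately have "(\<Sum>\<^sub>\<infinity>k. (cmod (v k - truncate n v k))\<^sup>2)
        = (\<Sum>\<^sub>\<infinity>k. (cmod (v k))\<^sup>2) - (\<Sum>k\<in>{- int n..int n}. (cmod (v k))\<^sup>2)"
      using assms by (simp add: infsum_diff is_l2_def)
    thus ?thesis by (simp only: power2_l2_norm)
  qed
  have "(\<lambda>n. (\<Sum>\<^sub>\<infinity>k. (cmod (v k))\<^sup>2) - (\<Sum>k\<in>{- int n..int n}. (cmod (v k))\<^sup>2))
      \<longlonglongrightarrow> (\<Sum>\<^sub>\<infinity>k. (cmod (v k))\<^sup>2) - (\<Sum>\<^sub>\<infinity>k. (cmod (v k))\<^sup>2)"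
    using assms unfolding is_l2_def by (intro tendsto_diff tendsto_const tendsto_sum_symmetric_interval)
  hence "(\<lambda>n. (\<Sum>\<^sub>\<infinity>k. (cmod (v k))\<^sup>2) - (\<Sum>k\<in>{- int n..int n}. (cmod (v k))\<^sup>2)) \<longlonglongrightarrow> 0"
    by simp
  hence "(\<lambda>n. sqrt ((l2_norm (\<lambda>k. v k - truncate n v k))\<^sup>2)) \<longlonglongrightarrow> sqrt 0"
    unfolding sq by (rule tendsto_real_sqrt)
  thus ?thesis by (simp add: l2_norm_nonneg)
qed

lemma l2_fatou:
  assumes l2: "\<And>n. is_l2 (f n)" and lim: "\<And>k. (\<lambda>n. f n k) \<longlonglongrightarrow> g k"
    and bound: "\<And>n. l2_norm (f n) \<le> B"
  shows "is_l2 g \<and> l2_norm g \<le> B"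
proof -
  have B: "0 \<le> B" using bound[of 0] l2_norm_nonneg order_trans by blast
  have fin: "(\<Sum>k\<in>F. (cmod (g k))\<^sup>2) \<le> B\<^sup>2" if F: "finite F" for F
  proof (rule LIMSEQ_le_const2)
    show "(\<lambda>n. \<Sum>k\<in>F. (cmod (f n k))\<^sup>2) \<longlonglongrightarrow> (\<Sum>k\<in>F. (cmod (g k))\<^sup>2)"
      by (intro tendsto_sum tendsto_power tendsto_norm lim)
    show "\<exists>N. \<forall>n\<ge>N. (\<Sum>k\<in>F. (cmod (f n k))\<^sup>2) \<le> B\<^sup>2"
    proof (intro exI allI impI)
      fix n
      have "(\<Sum>k\<in>F. (cmod (f n k))\<^sup>2) \<le> (\<Sum>\<^sub>\<infinity>k. (cmod (f n k))\<^sup>2)"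
        by (rule finite_sum_le_infsum) (use l2 F in \<open>auto simp: is_l2_def\<close>)
      also have "\<dots> = (l2_norm (f n))\<^sup>2" by (rule power2_l2_norm[symmetric])
      also have "\<dots> \<le> B\<^sup>2" by (rule power_mono[OF bound l2_norm_nonneg])
      finally show "(\<Sum>k\<in>F. (cmod (f n k))\<^sup>2) \<le> B\<^sup>2" .
    qed
  qed
  have lg: "is_l2 g"
    unfolding is_l2_def by (rule nonneg_bdd_above_summable_on) (auto intro!: bdd_aboveI2 fin)
  hence "(\<Sum>\<^sub>\<infinity>k. (cmod (g k))\<^sup>2) \<le> B\<^sup>2"
    unfolding is_l2_def by (rule infsum_le_finite_sums) (rule fin)
  hence "l2_norm g \<le> sqrt (B\<^sup>2)" unfolding l2_norm_def by (rule real_sqrt_le_mono)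
  with lg B show ?thesis by simp
qed

section \<open>The limit point case at \<open>-\<infinity>\<close>\<close>

lemma tendsto_wronski_at_bot:
  assumes u: "is_l2 u" "is_l2 (Lstar a b u)" and y: "is_l2 y" "is_l2 (Lstar a b y)"
    and supp: "\<And>k. 0 < k \<Longrightarrow> y k = 0"
  shows "((\<lambda>M. wronski a u (\<lambda>k. cnj (y k)) M)
           \<longlongrightarrow> l2_inner u (Lstar a b y) - l2_inner (Lstar a b u) y) at_bot"
proof -
  define h where "h k = Lstar a b u k * cnj (y k) - u k * cnj (Lstar a b y k)" for k
  have "h summable_on UNIV"
    unfolding h_def by (intro summable_on_diff l2_inner_summable u y)
  hence h1: "h summable_on {..1}" by (rule summable_on_subset) simp
  have "infsum h UNIV = l2_inner (Lstar a b u) y - l2_inner u (Lstar a b y)"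
    unfolding h_def l2_inner_def by (intro infsum_diff l2_inner_summable u y)
  moreover have "infsum h UNIV = infsum h {..1}"
    by (rule infsum_cong_neutral) (auto simp: h_def Lstar_def supp)
  moreover have "\<forall>\<^sub>F M in at_bot. sum h {M<..1} = - wronski a u (\<lambda>k. cnj (y k)) M"
    unfolding eventually_at_bot_linorder
  proof (intro exI[of _ 1] allI impI)
    fix M :: int assume "M \<le> 1"
    from green_formula[OF this, where y="\<lambda>k. cnj (y k)" and a=a and b=b and x=u]
    show "sum h {M<..1} = - wronski a u (\<lambda>k. cnj (y k)) M"
      by (simp add: h_def Lstar_cnj wronski_def supp mult.commute)
  qed
  ultimately have "((\<lambda>M. - wronski a u (\<lambda>k. cnj (y k)) M)
      \<longlongrightarrow> l2_inner (Lstar a b u) y - l2_inner u (Lstar a b y)) at_bot"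
    using Lim_transform_eventually[OF tendsto_sum_greaterThanAtMost_at_bot[OF h1]] by simp
  thus ?thesis by (simp flip: tendsto_minus_cancel_left)
qed

text \<open>\<open>isol\<close> solves \<open>L\<^sup>* u = \<i> u\<close> on \<open>k \<le> -1\<close> with \<open>u\<^sub>0 = 0\<close>, \<open>u\<^sub>-\<^sub>1 = 1\<close>, computed downwards;
  shifted by one index it is a formal eigenvector of \<open>J\<^sup>-\<close> for the eigenvalue \<open>\<i>\<close>.\<close>

fun isol_nat :: "(int \<Rightarrow> real) \<Rightarrow> (int \<Rightarrow> real) \<Rightarrow> nat \<Rightarrow> complex" where
  "isol_nat a b 0 = 0"
| "isol_nat a b (Suc 0) = 1"
| "isol_nat a b (Suc (Suc n)) =
     ((\<i> - of_real (b (- int n - 1))) * isol_nat a b (Suc n) - of_real (a (- int n - 1)) * isol_nat a b n)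
     / of_real (a (- int n - 2))"

definition isol :: "(int \<Rightarrow> real) \<Rightarrow> (int \<Rightarrow> real) \<Rightarrow> int \<Rightarrow> complex" where
  "isol a b k = (if k \<le> 0 then isol_nat a b (nat (- k)) else 0)"

lemma isol_nat_rec:
  assumes "\<And>k. a k > 0"
  shows "of_real (a (- int n - 1)) * isol_nat a b n + of_real (b (- int n - 1)) * isol_nat a b (Suc n)
       + of_real (a (- int n - 2)) * isol_nat a b (Suc (Suc n)) = \<i> * isol_nat a b (Suc n)"
proof -
  have "a (- int n - 2) \<noteq> 0" using assms[of "- int n - 2"] by simp
  hence "of_real (a (- int n - 2)) * isol_nat a b (Suc (Suc n))
      = (\<i> - of_real (b (- int n - 1))) * isol_nat a b (Suc n) - of_real (a (- int n - 1)) * isol_nat a b n"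
    by simp
  thus ?thesis by (simp add: algebra_simps)
qed

lemma Lstar_isol:
  assumes "\<And>k. a k > 0" and "l \<le> -1"
  shows "Lstar a b (isol a b) l = \<i> * isol a b l"
proof -
  define n where "n = nat (- l - 1)"
  have l: "l = - int n - 1" and "nat (- l) = Suc n" "nat (- (l + 1)) = n" "nat (- (l - 1)) = Suc (Suc n)"
    using assms(2) unfolding n_def by simp_all
  hence "Lstar a b (isol a b) l = of_real (a (- int n - 1)) * isol_nat a b n
      + of_real (b (- int n - 1)) * isol_nat a b (Suc n) + of_real (a (- int n - 2)) * isol_nat a b (Suc (Suc n))"
    unfolding Lstar_def isol_def using assms(2) by (simp add: l algebra_simps)
  also have "\<dots> = \<i> * isol a b l"
    unfolding isol_nat_rec[of a n b, OF assms(1)] isol_def using assms(2) \<open>nat (- l) = Suc n\<close> by simp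
  finally show ?thesis .
qed

lemma Jminus_green:
  "(\<Sum>n<N. Jminus a b f n * h n - f n * Jminus a b h n)
     = (if N = 0 then 0 else of_real (a (- int N - 1)) * (f N * h (N - 1) - f (N - 1) * h N))"
proof (induction N)
  case (Suc N)
  show ?case
  proof (cases N)
    case (Suc m)
    have "(\<Sum>n<Suc N. Jminus a b f n * h n - f n * Jminus a b h n)
        = of_real (a (- int N - 1)) * (f N * h (N - 1) - f (N - 1) * h N)
          + (Jminus a b f N * h N - f N * Jminus a b h N)"
      using Suc.IH Suc by simp
    also have "\<dots> = of_real (a (- int (Suc N) - 1)) * (f (Suc N) * h N - f N * h (Suc N))"
      using Suc by (simp add: Jminus_def algebra_simps)
    finally show ?thesis by simp
  qed (simp add: Jminus_def algebra_simps)
qed simp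

lemma Jminus_adj_ker_if_eigen:
  assumes lg: "is_l2 g" and Jg: "\<And>n. Jminus a b g n = lam * g n"
  shows "g \<in> Jminus_adj_ker a b lam"
  unfolding Jminus_adj_ker_def
proof (intro CollectI conjI allI impI lg)
  fix f :: "nat \<Rightarrow> complex" assume "fin_supp f"
  then obtain N where N: "{k. f k \<noteq> 0} \<subseteq> {..<N}"
    unfolding fin_supp_def using finite_nat_bounded by blast
  have fz: "f n = 0" if "n \<ge> N" for n using N that by force
  have Jcnj: "Jminus a b (\<lambda>n. cnj (g n)) n = cnj (Jminus a b g n)" for n
    by (simp add: Jminus_def)
  have "l2_inner (Jminus a b f) g = (\<Sum>n<Suc N. Jminus a b f n * cnj (g n))"
    unfolding l2_inner_def by (rule infsum_finite_support) (auto simp: Jminus_def fz)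
  moreover have "l2_inner f (\<lambda>n. lam * g n) = (\<Sum>n<Suc N. f n * Jminus a b (\<lambda>n. cnj (g n)) n)"
    unfolding l2_inner_def Jcnj Jg by (rule infsum_finite_support) (auto simp: fz)
  moreover have "(\<Sum>n<Suc N. Jminus a b f n * cnj (g n) - f n * Jminus a b (\<lambda>n. cnj (g n)) n) = 0"
    unfolding Jminus_green by (simp add: fz)
  ultimately show "l2_inner (Jminus a b f) g = l2_inner f (\<lambda>n. lam * g n)"
    by (simp add: sum_subtractf)
qed

lemma Jminus_isol_nat:
  assumes "\<And>k. a k > 0"
  shows "Jminus a b (\<lambda>n. isol_nat a b (Suc n)) n = \<i> * isol_nat a b (Suc n)"
proof -
  have "Jminus a b (\<lambda>n. isol_nat a b (Suc n)) n = of_real (a (- int n - 1)) * isol_nat a b n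
      + of_real (b (- int n - 1)) * isol_nat a b (Suc n) + of_real (a (- int n - 2)) * isol_nat a b (Suc (Suc n))"
    unfolding Jminus_def by (cases n) auto
  also have "\<dots> = \<i> * isol_nat a b (Suc n)" by (rule isol_nat_rec[OF assms])
  finally show ?thesis .
qed

lemma isol_not_l2:
  assumes apos: "\<And>k. a k > 0" and def00: "Jminus_def00 a b"
  shows "\<not> l2_on (isol a b) {..-1}"
proof
  assume l2: "l2_on (isol a b) {..-1}"
  define g where "g = (\<lambda>n. isol_nat a b (Suc n))"
  have bij: "bij_betw (\<lambda>n::nat. - int n - 1) UNIV {..-1}"
    by (rule bij_betwI[where g="\<lambda>k. nat (- k - 1)"]) auto
  have "(\<lambda>n. (cmod (isol a b (- int n - 1)))\<^sup>2) summable_on UNIV"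
    using summable_on_reindex_bij_betw[OF bij, of "\<lambda>k. (cmod (isol a b k))\<^sup>2"] l2 by simp
  moreover have "isol a b (- int n - 1) = g n" for n
    unfolding isol_def g_def by (simp add: nat_add_distrib)
  ultimately have "is_l2 g" unfolding is_l2_def by simp
  hence "g \<in> Jminus_adj_ker a b \<i>"
    by (rule Jminus_adj_ker_if_eigen) (simp add: g_def Jminus_isol_nat[OF apos])
  hence "g = (\<lambda>n. 0)" using def00 unfolding Jminus_def00_def by blast
  moreover have "g 0 = 1" unfolding g_def by simp
  ultimately show False by (metis zero_neq_one)
qed

lemma limit_point_at_bot:
  assumes apos: "\<And>k. a k > 0" and def00: "Jminus_def00 a b"
    and P: "Lstar_solution a b w P" and Q: "Lstar_solution a b w Q"
    and PQ: "\<And>k. wronski a P Q k = 1"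
  shows "\<not> (l2_on P {..-1} \<and> l2_on Q {..-1})"
  using l2_on_solution_if_limit_circle[OF P Q PQ _ _ Lstar_isol[OF apos]] isol_not_l2[OF apos def00]
  by blast

lemma wronski_limit_at_bot_eq_0:
  assumes apos: "\<And>k. a k > 0" and def00: "Jminus_def00 a b"
    and P: "Lstar_solution a b w P" and Q: "Lstar_solution a b w Q"
    and PQ: "\<And>k. wronski a P Q k = 1" and lP: "l2_on P {..-1}"
    and lu: "l2_on u {..-1}" and lf: "l2_on (\<lambda>l. Lstar a b u l - w * u l) {..-1}"
    and lim: "((\<lambda>M. wronski a u P M) \<longlongrightarrow> d) at_bot"
  shows "d = 0"
proof (rule ccontr)
  assume "d \<noteq> 0"
  hence "\<forall>\<^sub>F M in at_bot. norm d / 2 < norm (wronski a u P M)"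
    using order_tendstoD(1)[OF tendsto_norm[OF lim], of "norm d / 2"] by simp
  then obtain K0 where "\<And>M. M \<le> K0 \<Longrightarrow> norm d / 2 < norm (wronski a u P M)"
    unfolding eventually_at_bot_linorder by auto
  hence "l2_on Q {..-1}"
    using l2_on_second_solution[OF Q PQ lP lu lf, of "norm d / 2" K0] \<open>d \<noteq> 0\<close> by fastforce
  thus False using limit_point_at_bot[OF apos def00 P Q PQ] lP by blast
qed

section \<open>Self-adjoint extensions of \<open>L\<close>\<close>

definition delta_seq :: "int \<Rightarrow> int \<Rightarrow> complex" where
  "delta_seq k = (\<lambda>j. if j = k then 1 else 0)"

lemma fin_supp_delta_seq: "fin_supp (delta_seq k)"
  unfolding fin_supp_def delta_seq_def by simp

lemma l2_inner_delta_seq: "l2_inner x (delta_seq k) = x k"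
  unfolding l2_inner_def by (subst infsum_finite_support[of "{k}"]) (auto simp: delta_seq_def)

lemma l2_inner_Lstar_delta_seq: "l2_inner x (Lstar a b (delta_seq k)) = Lstar a b x k"
proof -
  have "l2_inner x (Lstar a b (delta_seq k)) = (\<Sum>j\<in>{k-1,k,k+1}. x j * cnj (Lstar a b (delta_seq k) j))"
    unfolding l2_inner_def by (rule infsum_finite_support) (auto simp: Lstar_def delta_seq_def)
  also have "\<dots> = Lstar a b x k"
    by (simp add: Lstar_def delta_seq_def algebra_simps)
  finally show ?thesis .
qed

locale selfadjoint_extension =
  fixes a b :: "int \<Rightarrow> real"
    and T :: "(int \<Rightarrow> complex) \<Rightarrow> int \<Rightarrow> complex"
    and D :: "(int \<Rightarrow> complex) set"
  assumes selfadj: "selfadj_ext a b T D"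
begin

lemma dom_l2: "u \<in> D \<Longrightarrow> is_l2 u"
  using selfadj unfolding selfadj_ext_def by blast

lemma T_l2: "u \<in> D \<Longrightarrow> is_l2 (T u)"
  using selfadj unfolding selfadj_ext_def by blast

lemma dom_zero: "(\<lambda>k. 0) \<in> D"
  using selfadj unfolding selfadj_ext_def by blast

lemma dom_add: "u \<in> D \<Longrightarrow> v \<in> D \<Longrightarrow> (\<lambda>k. u k + v k) \<in> D"
  using selfadj unfolding selfadj_ext_def by blast

lemma dom_cmult: "u \<in> D \<Longrightarrow> (\<lambda>k. c * u k) \<in> D"
  using selfadj unfolding selfadj_ext_def by blast

lemma fin_supp_dom: "fin_supp u \<Longrightarrow> u \<in> D"
  using selfadj unfolding selfadj_ext_def by blast

lemma T_fin_supp: "fin_supp u \<Longrightarrow> T u = Lstar a b u"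
  using selfadj unfolding selfadj_ext_def by blast

lemma dom_iff: "v \<in> D \<longleftrightarrow> is_l2 v \<and> (\<exists>w. is_l2 w \<and> (\<forall>u\<in>D. l2_inner (T u) v = l2_inner u w))"
  using selfadj unfolding selfadj_ext_def by blast

lemma T_symmetric: "u \<in> D \<Longrightarrow> v \<in> D \<Longrightarrow> l2_inner (T u) v = l2_inner u (T v)"
  using selfadj unfolding selfadj_ext_def by blast

lemma dom_diff: "u \<in> D \<Longrightarrow> v \<in> D \<Longrightarrow> (\<lambda>k. u k - v k) \<in> D"
  using dom_add[of u "\<lambda>k. (-1) * v k"] dom_cmult[of v "-1"] by simp

lemma dom_sum: "finite S \<Longrightarrow> (\<And>m. m \<in> S \<Longrightarrow> U m \<in> D) \<Longrightarrow> (\<lambda>k. \<Sum>m\<in>S. c m * U m k) \<in> D"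
proof (induction S rule: finite_induct)
  case (insert m S)
  hence "(\<lambda>k. c m * U m k + (\<Sum>m\<in>S. c m * U m k)) \<in> D" by (intro dom_add dom_cmult) auto
  thus ?case using insert by simp
qed (simp add: dom_zero)

lemma dom_finite_modification:
  assumes "u \<in> D" "finite {k. u k \<noteq> v k}"
  shows "v \<in> D"
proof -
  have "fin_supp (\<lambda>k. v k - u k)" unfolding fin_supp_def by (rule finite_subset[OF _ assms(2)]) auto
  hence "(\<lambda>k. u k + (v k - u k)) \<in> D" by (intro dom_add assms(1) fin_supp_dom)
  thus ?thesis by simp
qed

lemma T_eq_Lstar:
  assumes "u \<in> D"
  shows "T u = Lstar a b u"
proof
  fix k
  have "T u k = l2_inner (T u) (delta_seq k)" by (simp add: l2_inner_delta_seq)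
  also have "\<dots> = l2_inner u (T (delta_seq k))"
    by (rule T_symmetric[OF assms fin_supp_dom[OF fin_supp_delta_seq]])
  also have "\<dots> = Lstar a b u k" by (simp add: T_fin_supp[OF fin_supp_delta_seq] l2_inner_Lstar_delta_seq)
  finally show "T u k = Lstar a b u k" .
qed

lemma Im_mult_l2_norm_le:
  assumes u: "u \<in> D"
  shows "\<bar>Im z\<bar> * l2_norm u \<le> l2_norm (\<lambda>k. T u k - z * u k)"
proof -
  have lu: "is_l2 u" and lTu: "is_l2 (T u)" using dom_l2 T_l2 u by auto
  have lzu: "is_l2 (\<lambda>k. z * u k)" using lu unfolding is_l2_def by (rule l2_on_cmult)
  have ly: "is_l2 (\<lambda>k. T u k - z * u k)" using lTu lzu unfolding is_l2_def by (rule l2_on_diff)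
  have "cnj (l2_inner (T u) u) = l2_inner (T u) u"
    using T_symmetric[OF u u] l2_inner_commute[of u "T u"] by simp
  hence "Im (l2_inner (T u) u) = 0" by (auto simp: complex_eq_iff)
  moreover have "l2_inner (\<lambda>k. T u k - z * u k) u = l2_inner (T u) u - z * of_real ((l2_norm u)\<^sup>2)"
    using l2_inner_diff_left[OF lTu lzu lu] l2_inner_cmult_left[of z u u] l2_inner_self[OF lu] by simp
  ultimately have "\<bar>Im z\<bar> * (l2_norm u)\<^sup>2 = \<bar>Im (l2_inner (\<lambda>k. T u k - z * u k) u)\<bar>"
    by (simp add: abs_mult)
  also have "\<dots> \<le> cmod (l2_inner (\<lambda>k. T u k - z * u k) u)" by (rule abs_Im_le_cmod)
  also have "\<dots> \<le> l2_norm (\<lambda>k. T u k - z * u k) * l2_norm u" by (rule l2_inner_Cauchy_Schwarz[OF ly lu])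
  finally have "(\<bar>Im z\<bar> * l2_norm u) * l2_norm u \<le> l2_norm (\<lambda>k. T u k - z * u k) * l2_norm u"
    by (simp add: power2_eq_square mult.assoc)
  thus ?thesis using l2_norm_nonneg[of u]
    by (cases "l2_norm u = 0") (auto simp: l2_norm_nonneg)
qed

lemma T_minus_injective:
  assumes "u \<in> D" "Im z \<noteq> 0" "(\<lambda>k. T u k - z * u k) = (\<lambda>k. 0)"
  shows "u = (\<lambda>k. 0)"
proof (rule l2_norm_eq_0D[OF dom_l2[OF assms(1)]])
  have "\<bar>Im z\<bar> * l2_norm u \<le> 0"
    using Im_mult_l2_norm_le[OF assms(1), of z] assms(3) by (simp add: l2_norm_def)
  thus "l2_norm u = 0"
    using assms(2) l2_norm_nonneg[of u] by (simp add: mult_le_0_iff)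
qed

end

section \<open>The Green function\<close>

locale green_function = selfadjoint_extension +
  fixes Phi phi :: "complex \<Rightarrow> int \<Rightarrow> complex"
  assumes apos: "\<And>k. a k > 0" and def00: "Jminus_def00 a b"
    and Phi_solution: "\<And>z. Im z \<noteq> 0 \<Longrightarrow> Lstar_solution a b z (Phi z)"
    and Phi_l2: "\<And>z. Im z \<noteq> 0 \<Longrightarrow> l2_on (Phi z) {..-1}"
    and phi_solution: "\<And>z. Im z \<noteq> 0 \<Longrightarrow> Lstar_solution a b z (phi z)"
    and phi_l2: "\<And>z. Im z \<noteq> 0 \<Longrightarrow> l2_on (phi z) {0..}"
    and Phi_cnj: "\<And>z k. Im z \<noteq> 0 \<Longrightarrow> cnj (Phi z k) = Phi (cnj z) k"
    and wronski_ne_0: "\<And>z. Im z \<noteq> 0 \<Longrightarrow> wronski a (phi z) (Phi z) 0 \<noteq> 0"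
    and phi_trunc_dom: "\<And>z. Im z \<noteq> 0 \<Longrightarrow> (\<lambda>k. if k < 0 then 0 else phi z k) \<in> D"
begin

abbreviation G :: "complex \<Rightarrow> int \<Rightarrow> int \<Rightarrow> complex" where
  "G z \<equiv> Gker a (Phi z) (phi z)"

abbreviation R :: "complex \<Rightarrow> (int \<Rightarrow> complex) \<Rightarrow> int \<Rightarrow> complex" where
  "R z \<equiv> Gop a (Phi z) (phi z)"

lemma wronski_phi_Phi: "Im z \<noteq> 0 \<Longrightarrow> wronski a (phi z) (Phi z) k = wronski a (phi z) (Phi z) 0"
  by (rule wronski_const[OF phi_solution Phi_solution])

lemma Phi_partner:
  assumes "Im z \<noteq> 0"
  obtains Q where "Lstar_solution a b z Q" "\<And>k. wronski a (Phi z) Q k = 1"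
proof
  define W where "W = wronski a (phi z) (Phi z) 0"
  show "Lstar_solution a b z (\<lambda>k. (- 1 / W) * phi z k)"
    by (rule Lstar_solution_cmult[OF phi_solution[OF assms]])
  show "wronski a (Phi z) (\<lambda>k. (- 1 / W) * phi z k) k = 1" for k
  proof -
    have "wronski a (Phi z) (\<lambda>k. (- 1 / W) * phi z k) k = (- 1 / W) * - wronski a (phi z) (Phi z) k"
      unfolding wronski_cmult_right wronski_swap[of a "Phi z"] ..
    moreover have "wronski a (phi z) (Phi z) k = W" unfolding W_def by (rule wronski_phi_Phi[OF assms])
    moreover have "W \<noteq> 0" unfolding W_def by (rule wronski_ne_0[OF assms])
    ultimately show ?thesis by simp
  qed
qed

definition Phi_trunc :: "complex \<Rightarrow> int \<Rightarrow> complex" where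
  "Phi_trunc z k = (if k \<le> 0 then Phi z k else 0)"

lemma Phi_trunc_l2:
  assumes z: "Im z \<noteq> 0"
  shows "is_l2 (Phi_trunc z)" and "is_l2 (Lstar a b (Phi_trunc z))"
proof -
  show lPsi: "is_l2 (Phi_trunc z)"
  proof (rule is_l2_if_l2_on_halves)
    show "l2_on (Phi_trunc z) {..-1}"
      using Phi_l2[OF z] by (rule summable_on_cong[THEN iffD1, rotated]) (auto simp: Phi_trunc_def)
    show "l2_on (Phi_trunc z) {0..}"
      by (rule l2_on_finite_support, rule finite_subset[of _ "{0}"]) (auto simp: Phi_trunc_def)
  qed
  have "{k. z * Phi_trunc z k \<noteq> Lstar a b (Phi_trunc z) k} \<subseteq> {0, 1}"
  proof (rule subsetI, rule ccontr)
    fix k assume k: "k \<in> {k. z * Phi_trunc z k \<noteq> Lstar a b (Phi_trunc z) k}" "k \<notin> {0, 1}"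
    show False
    proof (cases "k \<le> -1")
      case True
      hence "Lstar a b (Phi_trunc z) k = Lstar a b (Phi z) k" by (simp add: Lstar_def Phi_trunc_def)
      with True k(1) Phi_solution[OF z] show False by (simp add: Lstar_solution_def Phi_trunc_def)
    next
      case False
      with k have "Lstar a b (Phi_trunc z) k = 0" "Phi_trunc z k = 0" by (auto simp: Lstar_def Phi_trunc_def)
      with k(1) show False by simp
    qed
  qed
  hence "finite {k. z * Phi_trunc z k \<noteq> Lstar a b (Phi_trunc z) k}" by (rule finite_subset) simp
  thus "is_l2 (Lstar a b (Phi_trunc z))"
    unfolding is_l2_def by (rule l2_on_finite_modification[OF l2_on_cmult[OF lPsi[unfolded is_l2_def]]])
qed

text \<open>The boundary term at \<open>-\<infinity>\<close> in Green's formula vanishes because \<open>L\<close> is in the limit point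
  case there.\<close>

lemma Phi_trunc_adjoint:
  assumes z: "Im z \<noteq> 0" and u: "u \<in> D"
  shows "l2_inner (T u) (Phi_trunc z) = l2_inner u (Lstar a b (Phi_trunc z))"
proof -
  have w: "Im (cnj z) \<noteq> 0" using z by simp
  have lu: "is_l2 u" and lLu: "is_l2 (Lstar a b u)" using dom_l2 T_l2 T_eq_Lstar u by auto
  obtain Q where Q: "Lstar_solution a b (cnj z) Q" "\<And>k. wronski a (Phi (cnj z)) Q k = 1"
    using Phi_partner[OF w] by blast
  have "((\<lambda>M. wronski a u (\<lambda>k. cnj (Phi_trunc z k)) M)
      \<longlongrightarrow> l2_inner u (Lstar a b (Phi_trunc z)) - l2_inner (Lstar a b u) (Phi_trunc z)) at_bot"
    by (rule tendsto_wronski_at_bot[OF lu lLu Phi_trunc_l2[OF z]]) (simp add: Phi_trunc_def)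
  moreover have "\<forall>\<^sub>F M in at_bot. wronski a u (\<lambda>k. cnj (Phi_trunc z k)) M = wronski a u (Phi (cnj z)) M"
    unfolding eventually_at_bot_linorder
    by (rule exI[of _ "-1"]) (simp add: wronski_def Phi_trunc_def Phi_cnj[OF z])
  ultimately have "((\<lambda>M. wronski a u (Phi (cnj z)) M)
      \<longlongrightarrow> l2_inner u (Lstar a b (Phi_trunc z)) - l2_inner (Lstar a b u) (Phi_trunc z)) at_bot"
    by (rule Lim_transform_eventually)
  moreover have "l2_on u {..-1}" "l2_on (\<lambda>l. Lstar a b u l - cnj z * u l) {..-1}"
    using lu lLu l2_on_cmult[of u UNIV "cnj z"] unfolding is_l2_def
    by (auto intro: summable_on_subset l2_on_diff)
  ultimately have "l2_inner u (Lstar a b (Phi_trunc z)) - l2_inner (Lstar a b u) (Phi_trunc z) = 0"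
    by (intro wronski_limit_at_bot_eq_0[OF apos def00 Phi_solution[OF w] Q Phi_l2[OF w]])
  thus ?thesis by (simp add: T_eq_Lstar[OF u])
qed

lemma Phi_trunc_dom:
  assumes z: "Im z \<noteq> 0"
  shows "Phi_trunc z \<in> D"
  unfolding dom_iff
  by (intro conjI Phi_trunc_l2[OF z] exI[of _ "Lstar a b (Phi_trunc z)"])
     (use Phi_trunc_l2[OF z] Phi_trunc_adjoint[OF z] in auto)

lemma Gker_column_dom:
  assumes z: "Im z \<noteq> 0"
  shows "(\<lambda>k. G z k m) \<in> D"
proof -
  define W where "W = wronski a (phi z) (Phi z) 0"
  have between: "finite {k::int. (k \<le> i) \<noteq> (k \<le> j)}" for i j
    by (rule finite_subset[of _ "{min i j..max i j}"]) auto
  have left: "(\<lambda>k. if k \<le> m then Phi z k else 0) \<in> D"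
    by (rule dom_finite_modification[OF Phi_trunc_dom[OF z]], rule finite_subset[OF _ between[of 0 m]])
       (auto simp: Phi_trunc_def)
  have right: "(\<lambda>k. if k \<le> m then 0 else phi z k) \<in> D"
    by (rule dom_finite_modification[OF phi_trunc_dom[OF z]], rule finite_subset[OF _ between[of "-1" m]]) auto
  have "(\<lambda>k. (phi z m / W) * (if k \<le> m then Phi z k else 0) + (Phi z m / W) * (if k \<le> m then 0 else phi z k)) \<in> D"
    by (intro dom_add dom_cmult left right)
  moreover have "(\<lambda>k. (phi z m / W) * (if k \<le> m then Phi z k else 0) + (Phi z m / W) * (if k \<le> m then 0 else phi z k))
      = (\<lambda>k. G z k m)"
    by (auto simp: Gker_def W_def field_simps)
  ultimately show ?thesis by simp
qed

lemma Gker_row_l2: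
  assumes z: "Im z \<noteq> 0"
  shows "l2_on (\<lambda>l. G z k l) UNIV"
proof -
  define W where "W = wronski a (phi z) (Phi z) 0"
  have "l2_on (phi z) {k..}"
    by (rule l2_on_cofinite[OF phi_l2[OF z]], rule finite_subset[of _ "{k..<0}"]) auto
  hence "l2_on (\<lambda>l. (Phi z k / W) * phi z l) {k..}" by (rule l2_on_cmult)
  hence A: "l2_on (\<lambda>l. G z k l) {k..}"
    by (rule summable_on_cong[THEN iffD1, rotated]) (auto simp: Gker_def W_def)
  have "l2_on (Phi z) {..<k}"
    by (rule l2_on_cofinite[OF Phi_l2[OF z]], rule finite_subset[of _ "{0..<k}"]) auto
  hence "l2_on (\<lambda>l. (phi z k / W) * Phi z l) {..<k}" by (rule l2_on_cmult)
  hence B: "l2_on (\<lambda>l. G z k l) {..<k}"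
    by (rule summable_on_cong[THEN iffD1, rotated]) (auto simp: Gker_def W_def mult.commute)
  have "{..<k} \<union> {k..} = UNIV" by auto
  with summable_on_union[OF B A] show ?thesis by simp
qed

lemma Lstar_Gker_diagonal:
  assumes z: "Im z \<noteq> 0"
  shows "Lstar a b (\<lambda>k. G z k l) l = 1 + z * G z l l"
proof -
  define W where "W = wronski a (phi z) (Phi z) 0"
  have W0: "W \<noteq> 0" unfolding W_def by (rule wronski_ne_0[OF z])
  have "Lstar a b (\<lambda>k. G z k l) l
      = (of_real (a l) * Phi z l * phi z (l+1) + of_real (b l) * Phi z l * phi z l
         + of_real (a (l-1)) * Phi z (l-1) * phi z l) / W"
    unfolding Lstar_def Gker_def W_def[symmetric] using W0 by (simp add: field_simps)
  also have "\<dots> = (wronski a (phi z) (Phi z) l + z * Phi z l * phi z l) / W"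
    using arg_cong[OF Lstar_solution_D[OF Phi_solution[OF z], of l], of "\<lambda>x. x * phi z l"]
    unfolding wronski_def by (simp add: algebra_simps)
  also have "\<dots> = 1 + z * G z l l"
    unfolding wronski_phi_Phi[OF z, of l] Gker_def W_def[symmetric] using W0 by (simp add: field_simps)
  finally show ?thesis .
qed

text \<open>Off the diagonal a column of \<open>G z\<close> is a multiple of \<open>\<Phi>\<^sub>z\<close> or of \<open>\<phi>\<^sub>z\<close> near \<open>k\<close>; on the
  diagonal the jump of the kernel produces the Wronskian, which cancels the normalisation.\<close>

lemma Lstar_Gker_column:
  assumes z: "Im z \<noteq> 0"
  shows "Lstar a b (\<lambda>k. G z k l) k = (if k = l then 1 else 0) + z * G z k l"
proof -
  define W where "W = wronski a (phi z) (Phi z) 0"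
  have W0: "W \<noteq> 0" unfolding W_def by (rule wronski_ne_0[OF z])
  consider "k < l" | "k = l" | "l < k" by linarith
  thus ?thesis
  proof cases
    case 1
    hence "Lstar a b (\<lambda>k. G z k l) k
        = (of_real (a k) * Phi z (k+1) + of_real (b k) * Phi z k + of_real (a (k-1)) * Phi z (k-1)) * phi z l / W"
      unfolding Lstar_def Gker_def W_def[symmetric] using W0 by (simp add: field_simps)
    thus ?thesis unfolding Lstar_solution_D[OF Phi_solution[OF z]] using 1 by (simp add: Gker_def W_def)
  next
    case 3
    have "G z (k-1) l = Phi z l * phi z (k-1) / W"
      using 3 by (cases "k - 1 = l") (auto simp: Gker_def W_def)
    hence "Lstar a b (\<lambda>k. G z k l) k
        = Phi z l * (of_real (a k) * phi z (k+1) + of_real (b k) * phi z k + of_real (a (k-1)) * phi z (k-1)) / W"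
      unfolding Lstar_def Gker_def W_def[symmetric] using 3 W0 by (simp add: field_simps)
    thus ?thesis unfolding Lstar_solution_D[OF phi_solution[OF z]] using 3 by (simp add: Gker_def W_def)
  qed (simp add: Lstar_Gker_diagonal[OF z])
qed

lemma Gop_summable:
  assumes "Im z \<noteq> 0" "is_l2 v"
  shows "(\<lambda>l. v l * G z k l) summable_on UNIV"
  using l2_on_mult[OF assms(2)[unfolded is_l2_def] Gker_row_l2[OF assms(1)]] .

lemma Lstar_Gop:
  assumes z: "Im z \<noteq> 0" and v: "is_l2 v"
  shows "Lstar a b (R z v) k = v k + z * R z v k"
proof -
  have s: "\<And>j. (\<lambda>l. v l * G z j l) summable_on UNIV" by (rule Gop_summable[OF z v])
  have "Lstar a b (R z v) k
      = (\<Sum>\<^sub>\<infinity>l. of_real (a k) * (v l * G z (k+1) l) + of_real (b k) * (v l * G z k l)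
                  + of_real (a (k-1)) * (v l * G z (k-1) l))"
    unfolding Lstar_def Gop_def
    by (subst infsum_add, (intro summable_on_add summable_on_cmult_right s)+,
        subst infsum_add, (intro summable_on_add summable_on_cmult_right s)+)
       (simp add: infsum_cmult_right')
  also have "\<dots> = (\<Sum>\<^sub>\<infinity>l. (if l = k then v l else 0) + z * (v l * G z k l))"
  proof (rule infsum_cong)
    fix l
    have "of_real (a k) * (v l * G z (k+1) l) + of_real (b k) * (v l * G z k l) + of_real (a (k-1)) * (v l * G z (k-1) l)
        = v l * Lstar a b (\<lambda>k. G z k l) k"
      by (simp add: Lstar_def algebra_simps)
    also have "\<dots> = (if l = k then v l else 0) + z * (v l * G z k l)"
      unfolding Lstar_Gker_column[OF z] by (auto simp: algebra_simps)
    finally show "of_real (a k) * (v l * G z (k+1) l) + of_real (b k) * (v l * G z k l)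
        + of_real (a (k-1)) * (v l * G z (k-1) l) = (if l = k then v l else 0) + z * (v l * G z k l)" .
  qed
  also have "\<dots> = (\<Sum>\<^sub>\<infinity>l. if l = k then v l else 0) + z * R z v k"
  proof -
    have "(\<lambda>l. if l = k then v l else 0) summable_on UNIV"
      by (rule finite_nonzero_values_imp_summable_on, rule finite_subset[of _ "{k}"]) auto
    thus ?thesis unfolding Gop_def
      by (subst infsum_add) (auto intro: summable_on_cmult_right s simp: infsum_cmult_right')
  qed
  also have "(\<Sum>\<^sub>\<infinity>l. if l = k then v l else 0) = v k"
    by (subst infsum_finite_support[of "{k}"]) auto
  finally show ?thesis .
qed

lemma Gop_fin_supp_dom:
  assumes z: "Im z \<noteq> 0" and v: "fin_supp v"
  shows "R z v \<in> D"
proof -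
  define S where "S = {k. v k \<noteq> 0}"
  have S: "finite S" using v unfolding fin_supp_def S_def .
  have "R z v = (\<lambda>k. \<Sum>m\<in>S. v m * G z k m)"
    unfolding Gop_def by (rule ext, rule infsum_finite_support[OF S]) (auto simp: S_def)
  also have "\<dots> \<in> D" by (rule dom_sum[OF S Gker_column_dom[OF z]])
  finally show ?thesis .
qed

lemma T_Gop_fin_supp:
  assumes "Im z \<noteq> 0" "fin_supp v"
  shows "T (R z v) = (\<lambda>k. v k + z * R z v k)"
  using T_eq_Lstar[OF Gop_fin_supp_dom[OF assms]] Lstar_Gop[OF assms(1) is_l2_fin_supp[OF assms(2)]]
  by auto

lemma Gop_diff:
  assumes "Im z \<noteq> 0" "is_l2 v" "is_l2 w"
  shows "R z (\<lambda>k. v k - w k) = (\<lambda>k. R z v k - R z w k)"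
  unfolding Gop_def by (simp add: left_diff_distrib infsum_diff Gop_summable assms)

lemma tendsto_Gop_truncate:
  assumes "Im z \<noteq> 0" "is_l2 v"
  shows "(\<lambda>n. R z (truncate n v) k) \<longlonglongrightarrow> R z v k"
proof -
  have "R z (truncate n v) k = (\<Sum>l\<in>{- int n..int n}. v l * G z k l)" for n
    unfolding Gop_def truncate_def
    by (subst infsum_finite_support[of "{- int n..int n}"]) (auto intro!: sum.cong)
  with tendsto_sum_symmetric_interval[OF Gop_summable[OF assms]] show ?thesis
    unfolding Gop_def by simp
qed

lemma Gop_bounded:
  assumes z: "Im z \<noteq> 0" and v: "is_l2 v"
  shows "is_l2 (R z v) \<and> \<bar>Im z\<bar> * l2_norm (R z v) \<le> l2_norm v"
proof -
  have "is_l2 (R z v) \<and> l2_norm (R z v) \<le> l2_norm v / \<bar>Im z\<bar>"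
  proof (rule l2_fatou)
    show "is_l2 (R z (truncate n v))" for n
      by (rule dom_l2[OF Gop_fin_supp_dom[OF z fin_supp_truncate]])
    show "(\<lambda>n. R z (truncate n v) k) \<longlonglongrightarrow> R z v k" for k
      by (rule tendsto_Gop_truncate[OF z v])
    show "l2_norm (R z (truncate n v)) \<le> l2_norm v / \<bar>Im z\<bar>" for n
    proof -
      have "\<bar>Im z\<bar> * l2_norm (R z (truncate n v)) \<le> l2_norm (truncate n v)"
        using Im_mult_l2_norm_le[OF Gop_fin_supp_dom[OF z fin_supp_truncate], of z n v]
        by (simp add: T_Gop_fin_supp[OF z fin_supp_truncate])
      also have "\<dots> \<le> l2_norm v" by (rule l2_norm_truncate_le[OF v])
      finally show ?thesis using z by (simp add: field_simps)
    qed
  qed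
  thus ?thesis using z by (simp add: field_simps)
qed

lemma Gop_adjoint_defect:
  assumes z: "Im z \<noteq> 0" and v: "is_l2 v" and u: "u \<in> D" and t: "fin_supp t"
  defines "r \<equiv> \<lambda>k. v k - t k"
  shows "l2_inner (T u) (R z v) - l2_inner u (\<lambda>k. v k + z * R z v k)
       = l2_inner (T u) (R z r) - l2_inner u r - cnj z * l2_inner u (R z r)"
proof -
  have lu: "is_l2 u" and lTu: "is_l2 (T u)" using dom_l2 T_l2 u by auto
  have lt: "is_l2 t" by (rule is_l2_fin_supp[OF t])
  have lr: "is_l2 r" unfolding r_def using v lt unfolding is_l2_def by (rule l2_on_diff)
  have lRt: "is_l2 (R z t)" and lRr: "is_l2 (R z r)" using Gop_bounded[OF z] lt lr by blast+
  have lzRt: "is_l2 (\<lambda>k. z * R z t k)" and lzRr: "is_l2 (\<lambda>k. z * R z r k)"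
    using lRt lRr unfolding is_l2_def by (auto intro: l2_on_cmult)
  have v_eq: "v = (\<lambda>k. t k + r k)" and Rv_eq: "R z v = (\<lambda>k. R z t k + R z r k)"
    using Gop_diff[OF z v lt] unfolding r_def by (auto simp: fun_eq_iff)
  have "l2_inner (T u) (R z t) = l2_inner u (\<lambda>k. t k + z * R z t k)"
    using T_symmetric[OF u Gop_fin_supp_dom[OF z t]] T_Gop_fin_supp[OF z t] by simp
  also have "\<dots> = l2_inner u t + cnj z * l2_inner u (R z t)"
    by (simp add: l2_inner_add_right[OF lu lt lzRt] l2_inner_cmult_right)
  finally have "l2_inner (T u) (R z t) = l2_inner u t + cnj z * l2_inner u (R z t)" .
  moreover have "l2_inner u (\<lambda>k. v k + z * R z v k) = l2_inner u v + cnj z * l2_inner u (R z v)"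
    using Gop_bounded[OF z v] unfolding is_l2_def
    by (simp add: l2_inner_add_right[OF lu v, unfolded is_l2_def] l2_on_cmult l2_inner_cmult_right)
  moreover have "l2_inner u v = l2_inner u t + l2_inner u r"
    by (subst v_eq) (rule l2_inner_add_right[OF lu lt lr])
  moreover have "l2_inner u (R z v) = l2_inner u (R z t) + l2_inner u (R z r)"
    by (subst Rv_eq) (rule l2_inner_add_right[OF lu lRt lRr])
  moreover have "l2_inner (T u) (R z v) = l2_inner (T u) (R z t) + l2_inner (T u) (R z r)"
    unfolding Rv_eq by (rule l2_inner_add_right[OF lTu lRt lRr])
  ultimately show ?thesis by (simp add: algebra_simps)
qed

lemma Gop_adjoint:
  assumes z: "Im z \<noteq> 0" and v: "is_l2 v" and u: "u \<in> D"
  shows "l2_inner (T u) (R z v) = l2_inner u (\<lambda>k. v k + z * R z v k)"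
proof -
  have lu: "is_l2 u" and lTu: "is_l2 (T u)" using dom_l2 T_l2 u by auto
  define X where "X = l2_inner (T u) (R z v) - l2_inner u (\<lambda>k. v k + z * R z v k)"
  define C where "C = (l2_norm (T u) + cmod z * l2_norm u) / \<bar>Im z\<bar> + l2_norm u"
  have bound: "cmod X \<le> C * l2_norm (\<lambda>k. v k - truncate n v k)" for n
  proof -
    define r where "r = (\<lambda>k. v k - truncate n v k)"
    have lr: "is_l2 r"
      unfolding r_def using v is_l2_fin_supp[OF fin_supp_truncate] unfolding is_l2_def by (rule l2_on_diff)
    have lRr: "is_l2 (R z r)" and Rr: "l2_norm (R z r) \<le> l2_norm r / \<bar>Im z\<bar>"
      using Gop_bounded[OF z lr] z by (auto simp: field_simps)
    have "X = l2_inner (T u) (R z r) - l2_inner u r - cnj z * l2_inner u (R z r)"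
      unfolding X_def r_def by (rule Gop_adjoint_defect[OF z v u fin_supp_truncate])
    hence "cmod X \<le> cmod (l2_inner (T u) (R z r) - l2_inner u r) + cmod (cnj z * l2_inner u (R z r))"
      by (simp only: norm_triangle_ineq4)
    also have "\<dots> \<le> cmod (l2_inner (T u) (R z r)) + cmod (l2_inner u r) + cmod z * cmod (l2_inner u (R z r))"
      using norm_triangle_ineq4[of "l2_inner (T u) (R z r)" "l2_inner u r"] by (simp add: norm_mult)
    also have "\<dots> \<le> l2_norm (T u) * l2_norm (R z r) + l2_norm u * l2_norm r + cmod z * (l2_norm u * l2_norm (R z r))"
      by (intro add_mono mult_left_mono l2_inner_Cauchy_Schwarz lTu lu lr lRr) simp
    also have "\<dots> \<le> l2_norm (T u) * (l2_norm r / \<bar>Im z\<bar>) + l2_norm u * l2_norm r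
        + cmod z * (l2_norm u * (l2_norm r / \<bar>Im z\<bar>))"
      by (intro add_mono mult_left_mono Rr order_refl mult_nonneg_nonneg l2_norm_nonneg norm_ge_zero)
    also have "\<dots> = C * l2_norm r" unfolding C_def by (simp add: field_simps add_divide_distrib)
    finally show ?thesis unfolding r_def .
  qed
  have "(\<lambda>n. C * l2_norm (\<lambda>k. v k - truncate n v k)) \<longlonglongrightarrow> C * 0"
    by (intro tendsto_mult tendsto_const tendsto_l2_norm_truncate_remainder v)
  hence "cmod X \<le> C * 0" by (rule LIMSEQ_le_const) (use bound in auto)
  thus ?thesis unfolding X_def by simp
qed

lemma Gop_right_inverse:
  assumes z: "Im z \<noteq> 0" and v: "is_l2 v"
  shows "R z v \<in> D \<and> (\<lambda>k. T (R z v) k - z * R z v k) = v"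
proof -
  have lR: "is_l2 (R z v)" using Gop_bounded[OF z v] by blast
  hence "is_l2 (\<lambda>k. v k + z * R z v k)"
    using v unfolding is_l2_def by (intro l2_on_add l2_on_cmult)
  hence RD: "R z v \<in> D"
    unfolding dom_iff using Gop_adjoint[OF z v] by (intro conjI lR exI[of _ "\<lambda>k. v k + z * R z v k"]) auto
  moreover have "T (R z v) = (\<lambda>k. v k + z * R z v k)"
    using T_eq_Lstar[OF RD] Lstar_Gop[OF z v] by auto
  ultimately show ?thesis by simp
qed

lemma Gop_left_inverse:
  assumes z: "Im z \<noteq> 0" and u: "u \<in> D"
  shows "R z (\<lambda>k. T u k - z * u k) = u"
proof -
  have lu: "is_l2 u" and lTu: "is_l2 (T u)" using dom_l2 T_l2 u by auto
  define g where "g = R z (\<lambda>k. T u k - z * u k)"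
  have "is_l2 (\<lambda>k. T u k - z * u k)"
    using lTu lu unfolding is_l2_def by (intro l2_on_diff l2_on_cmult)
  from Gop_right_inverse[OF z this]
  have g: "g \<in> D" "\<And>k. T g k - z * g k = T u k - z * u k" unfolding g_def by (auto simp: fun_eq_iff)
  have "(\<lambda>k. g k - u k) \<in> D" by (rule dom_diff[OF g(1) u])
  moreover have "(\<lambda>k. T (\<lambda>k. g k - u k) k - z * (g k - u k)) = (\<lambda>k. 0)"
    using g(2) by (simp add: fun_eq_iff T_eq_Lstar dom_diff[OF g(1) u] T_eq_Lstar[OF g(1), symmetric]
        T_eq_Lstar[OF u, symmetric] Lstar_diff algebra_simps)
  ultimately have "(\<lambda>k. g k - u k) = (\<lambda>k. 0)" by (rule T_minus_injective[OF _ z])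
  thus ?thesis unfolding g_def[symmetric] by (simp add: fun_eq_iff)
qed

end

theorem proposition4p3p3:
  fixes a b :: "int \<Rightarrow> real"
    and T :: "(int \<Rightarrow> complex) \<Rightarrow> (int \<Rightarrow> complex)"
    and D :: "(int \<Rightarrow> complex) set"
    and Phi phi :: "complex \<Rightarrow> int \<Rightarrow> complex"
  assumes apos: "\<And>k. a k > 0"
    and def00: "Jminus_def00 a b"
    and sa: "selfadj_ext a b T D"
    and Phi_S: "\<And>z. Im z \<noteq> 0 \<Longrightarrow> Phi z \<in> S_minus a b z \<and> Phi z \<noteq> (\<lambda>k. 0)"
    and phi_S: "\<And>z. Im z \<noteq> 0 \<Longrightarrow> phi z \<in> S_plus a b z"
    and Phi_cnj: "\<And>z k. Im z \<noteq> 0 \<Longrightarrow> cnj (Phi z k) = Phi (cnj z) k"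
    and phi_cnj: "\<And>z k. Im z \<noteq> 0 \<Longrightarrow> cnj (phi z k) = phi (cnj z) k"
    and wr: "\<And>z. Im z \<noteq> 0 \<Longrightarrow> wronski a (phi z) (Phi z) 0 \<noteq> 0"
    and trunc: "\<And>z. Im z \<noteq> 0 \<Longrightarrow> (\<lambda>k. if k < 0 then 0 else phi z k) \<in> D"
  shows "\<forall>z. Im z \<noteq> 0 \<longrightarrow>
           (\<forall>v. is_l2 v \<longrightarrow> Gop a (Phi z) (phi z) v \<in> D \<and>
                 (\<lambda>k. T (Gop a (Phi z) (phi z) v) k - z * Gop a (Phi z) (phi z) v k) = v) \<and>
           (\<forall>u\<in>D. Gop a (Phi z) (phi z) (\<lambda>k. T u k - z * u k) = u)"
proof -
  interpret green_function a b T D Phi phi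
    by unfold_locales (use apos def00 sa Phi_S phi_S Phi_cnj wr trunc in \<open>auto simp: S_minus_iff S_plus_iff\<close>)
  show ?thesis using Gop_right_inverse Gop_left_inverse by blast
qed

end
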